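(* Let $A\in\{0,1\}^{N\times n}$ and write $m_\infty:=\mathsf{m}^{rd}(+\infty,A)$. For every $\epsilon>0$ there exists a constant $C_\epsilon=O(\epsilon^{-4})$, depending only on $\epsilon$, such that $$\mathsf{m}^{rd}\bigl(C_\epsilon\cdot m_\infty^{-2}\cdot\log(\min(n,N)),\,A\bigr)\ \ge\ (1-\epsilon)\,m_\infty .$$
   Context: For $A\in\{0,1\}^{N\times n}$, $m\ge 0$ and $\tau\in\mathbb{R}$, unit vectors $U_1,\dots,U_N\in\mathbb{R}^d$ and $V_1,\dots,V_n\in\mathbb{R}^d$ form a margin-$m$, relative-bias-$\tau$ embedding of $A$ in dimension $d$ if $\langle U_j,V_i\rangle\ge\tau+m$ whenever $A_{ji}=1$ and $\langle U_j,V_i\rangle\le\tau-m$ whenever $A_{ji}=0$. The quantity $\mathsf{m}^{rd}(d,A)$ is the supremum of all $m\ge 0$ for which a margin-$m$, relative-bias-$0$ embedding of $A$ in dimension $d$ exists ($-\infty$ if none exists), and $\mathsf{m}^{rd}(+\infty,A):=\sup_d\mathsf{m}^{rd}(d,A)$. *)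

theory Defs
  imports "HOL-Analysis.Analysis" "HOL-Library.Landau_Symbols"
begin

text \<open>Vectors in R^d are represented as functions nat => real vanishing outside {..<d}.
  A matrix A in {0,1}^(N x n) is a predicate A :: nat => nat => bool on j < N, i < n.\<close>

definition vec_in :: "nat \<Rightarrow> (nat \<Rightarrow> real) \<Rightarrow> bool" where
  "vec_in d u \<longleftrightarrow> (\<forall>k\<ge>d. u k = 0)"

definition dinner :: "nat \<Rightarrow> (nat \<Rightarrow> real) \<Rightarrow> (nat \<Rightarrow> real) \<Rightarrow> real" where
  "dinner d u v = (\<Sum>k<d. u k * v k)"

definition unit_vec :: "nat \<Rightarrow> (nat \<Rightarrow> real) \<Rightarrow> bool" where
  "unit_vec d u \<longleftrightarrow> vec_in d u \<and> dinner d u u = 1"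

definition is_embedding ::
  "nat \<Rightarrow> nat \<Rightarrow> nat \<Rightarrow> (nat \<Rightarrow> nat \<Rightarrow> bool) \<Rightarrow> real \<Rightarrow> real
   \<Rightarrow> (nat \<Rightarrow> nat \<Rightarrow> real) \<Rightarrow> (nat \<Rightarrow> nat \<Rightarrow> real) \<Rightarrow> bool" where
  "is_embedding d N n A m \<tau> U V \<longleftrightarrow>
     (\<forall>j<N. unit_vec d (U j)) \<and> (\<forall>i<n. unit_vec d (V i)) \<and>
     (\<forall>j<N. \<forall>i<n. (A j i \<longrightarrow> dinner d (U j) (V i) \<ge> \<tau> + m) \<and>
                   (\<not> A j i \<longrightarrow> dinner d (U j) (V i) \<le> \<tau> - m))"

text \<open>m^rd(d,A): supremum of admissible margins (Sup of the empty set in ereal is -infinity).\<close>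
definition mrd :: "nat \<Rightarrow> nat \<Rightarrow> nat \<Rightarrow> (nat \<Rightarrow> nat \<Rightarrow> bool) \<Rightarrow> ereal" where
  "mrd d N n A = Sup {ereal m | m. m \<ge> 0 \<and> (\<exists>U V. is_embedding d N n A m 0 U V)}"

definition mrd_inf :: "nat \<Rightarrow> nat \<Rightarrow> (nat \<Rightarrow> nat \<Rightarrow> bool) \<Rightarrow> ereal" where
  "mrd_inf N n A = (SUP d. mrd d N n A)"

end

theory Submission
  imports Defs "HOL-Probability.Hoeffding"
begin

text \<open>Write \<open>s\<^sub>j\<^sub>i = \<plusminus>1\<close> for the sign pattern of \<open>A\<close>. A margin-\<open>m\<close> embedding makes every point of
  each signed hull \<open>conv {s\<^sub>j\<^sub>i V\<^sub>i | i}\<close> have norm at least \<open>m\<close> (pair it with \<open>U\<^sub>j\<close>); conversely,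
  if such a hull stays at distance \<open>r\<close> from the origin, its normalised (near) minimum-norm point
  is a row vector of margin about \<open>r\<close>. So take a near-optimal embedding in some dimension and
  project the \<open>V\<^sub>i\<close> by a \<open>\<plusminus>1\<close> matrix with \<open>d\<close> rows. By Maurey's empirical method every point of a
  signed hull lies within \<open>\<surd>(2/k)\<close> of an average of \<open>k \<approx> \<epsilon>\<^sup>-\<^sup>2 m\<^sup>-\<^sup>2\<close> of the vectors \<open>\<plusminus>V\<^sub>i\<close>; there are at
  most \<open>(2n)\<^sup>k\<close> such averages, so Johnson--Lindenstrauss preserves all their norms as soon as
  \<open>d \<approx> \<epsilon>\<^sup>-\<^sup>2 k log n \<approx> \<epsilon>\<^sup>-\<^sup>4 m\<^sup>-\<^sup>2 log n\<close>, and the projected hulls stay at distance \<open>\<approx> (1 - \<epsilon>) m\<close>.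
  Transposing \<open>A\<close> gives \<open>log (min n N)\<close>. A good sign matrix is found by averaging over all of
  them; the Chernoff bounds come from exponential moments of Rademacher sums, dominated by Gaussian ones.\<close>

section \<open>Rademacher averages\<close>

lemma cosh_le_exp_half_sq: "cosh x \<le> exp (x^2 / 2)" for x :: real
proof -
  have nonneg: "cosh y \<le> exp (y^2 / 2)" if "y \<ge> 0" for y :: real
  proof -
    have "- (2*y) * (1/2) + ln (1 + (1/2) * (exp (2*y) - 1)) \<le> (2*y)^2 / 8"
      using Hoeffdings_lemma_aux[of "2*y" "1/2"] that by simp
    hence "ln ((1 + exp (2*y)) / 2) \<le> y + y^2 / 2"
      by (simp add: power2_eq_square field_simps)
    hence "(1 + exp (2*y)) / 2 \<le> exp (y + y^2 / 2)"
      by (smt (verit) exp_gt_zero exp_le_cancel_iff exp_ln)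
    hence "exp (-y) * ((1 + exp (2*y)) / 2) \<le> exp (-y) * exp (y + y^2 / 2)"
      by (intro mult_left_mono) auto
    moreover have "exp (-y) * ((1 + exp (2*y)) / 2) = cosh y"
      by (simp add: cosh_def field_simps flip: exp_add)
    ultimately show ?thesis
      by (simp flip: exp_add)
  qed
  show ?thesis
    using nonneg[of x] nonneg[of "-x"] by (cases "x \<ge> 0") auto
qed

lemma exp_neg_le_quadratic: "0 \<le> v \<Longrightarrow> exp (-v) \<le> 1 - v + v^2 / 2" for v :: real
proof -
  assume "0 \<le> v"
  obtain t where "exp (-v) = (\<Sum>m<3. (-v)^m / fact m) + exp t / fact 3 * (-v)^3"
    using Maclaurin_exp_le[of "-v" 3] by blast
  moreover have "exp t / fact 3 * (-v)^3 \<le> 0"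
    using \<open>0 \<le> v\<close> by (simp add: mult_nonneg_nonpos)
  ultimately show ?thesis
    by (simp add: numeral_3_eq_3 power2_eq_square)
qed

lemma exp_le_inverse_sqrt: "2 * b < 1 \<Longrightarrow> exp b \<le> 1 / sqrt (1 - 2 * b)" for b :: real
proof -
  assume b: "2 * b < 1"
  have "(exp b * sqrt (1 - 2 * b))^2 = exp (2 * b) * (1 - 2 * b)"
    using b by (simp add: power_mult_distrib exp_double)
  also have "\<dots> \<le> exp (2 * b) * exp (- 2 * b)"
    using exp_ge_add_one_self[of "- 2 * b"] by (intro mult_left_mono) auto
  also have "\<dots> = 1^2"
    by (simp flip: exp_add)
  finally have "exp b * sqrt (1 - 2 * b) \<le> 1"
    by (rule power2_le_imp_le) simp
  then show ?thesis
    using b by (simp add: field_simps)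
qed

lemma exp_le_gauss_factor:
  fixes b x :: real
  assumes x: "0 \<le> x" and b: "2 * b < 1"
  shows "exp b * exp (x * (1 + 2 * b)) \<le> exp (x / (1 - 2 * b)) / sqrt (1 - 2 * b)"
proof -
  have "1 + 2 * b \<le> 1 / (1 - 2 * b)"
    using b by (simp add: field_simps)
  then have "x * (1 + 2 * b) \<le> x * (1 / (1 - 2 * b))"
    using x by (intro mult_left_mono)
  then have "exp b * exp (x * (1 + 2 * b)) \<le> 1 / sqrt (1 - 2 * b) * exp (x / (1 - 2 * b))"
    using exp_le_inverse_sqrt[OF b] b by (intro mult_mono) auto
  then show ?thesis
    by simp
qed

fun sign_avg :: "nat \<Rightarrow> (real list \<Rightarrow> real) \<Rightarrow> real" where
  "sign_avg 0 f = f []"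
| "sign_avg (Suc D) f = (sign_avg D (\<lambda>e. f ((-1) # e)) + sign_avg D (\<lambda>e. f (1 # e))) / 2"

text \<open>\<open>sign_avg D f\<close> is the mean of \<open>f\<close> over the \<open>2^D\<close> sign vectors \<open>e \<in> {-1,1}^D\<close>,
  i.e. the expectation over a Rademacher vector.\<close>

lemma sign_avg_mono: "(\<And>e. f e \<le> g e) \<Longrightarrow> sign_avg D f \<le> sign_avg D g"
proof (induction D arbitrary: f g)
  case (Suc D)
  have "sign_avg D (\<lambda>e. f ((-1) # e)) \<le> sign_avg D (\<lambda>e. g ((-1) # e))"
    and "sign_avg D (\<lambda>e. f (1 # e)) \<le> sign_avg D (\<lambda>e. g (1 # e))"
    by (rule Suc.IH, rule Suc.prems)+
  then show ?case
    by simp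
qed simp

lemma sign_avg_add: "sign_avg D (\<lambda>e. f e + g e) = sign_avg D f + sign_avg D g"
  by (induction D arbitrary: f g) (simp_all add: field_simps)

lemma sign_avg_cmult: "sign_avg D (\<lambda>e. c * f e) = c * sign_avg D f"
  by (induction D arbitrary: f) (simp_all add: field_simps)

lemma sign_avg_const: "sign_avg D (\<lambda>e. c) = c"
  by (induction D) simp_all

lemma sign_avg_nonneg: "(\<And>e. 0 \<le> f e) \<Longrightarrow> 0 \<le> sign_avg D f"
  using sign_avg_mono[of "\<lambda>e. 0" f D] by (simp add: sign_avg_const)

lemma sign_avg_less_imp_ex: "sign_avg D f < c \<Longrightarrow> \<exists>e. length e = D \<and> f e < c"
proof (induction D arbitrary: f)
  case (Suc D)
  then have "sign_avg D (\<lambda>e. f ((-1) # e)) < c \<or> sign_avg D (\<lambda>e. f (1 # e)) < c"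
    by auto
  then obtain a where "sign_avg D (\<lambda>e. f (a # e)) < c"
    by blast
  then obtain e where "length e = D" "f (a # e) < c"
    using Suc.IH by blast
  then show ?case
    by (intro exI[of _ "a # e"]) simp
qed simp

definition sign_dot :: "real list \<Rightarrow> (nat \<Rightarrow> real) \<Rightarrow> real" where
  "sign_dot r y = (\<Sum>l<length r. r ! l * y l)"

lemma sign_dot_Nil [simp]: "sign_dot [] y = 0"
  by (simp add: sign_dot_def)

lemma sign_dot_Cons [simp]: "sign_dot (a # r) y = a * y 0 + sign_dot r (\<lambda>l. y (Suc l))"
  unfolding sign_dot_def length_Cons sum.lessThan_Suc_shift by simp

definition sqnorm :: "nat \<Rightarrow> (nat \<Rightarrow> real) \<Rightarrow> real" where
  "sqnorm d v = (\<Sum>l<d. (v l)^2)"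

lemma sqnorm_Suc: "sqnorm (Suc D) y = (y 0)^2 + sqnorm D (\<lambda>l. y (Suc l))"
  unfolding sqnorm_def sum.lessThan_Suc_shift by simp

lemma sqnorm_nonneg: "0 \<le> sqnorm d v"
  unfolding sqnorm_def by (simp add: sum_nonneg)

text \<open>The value of \<open>E exp (t (c + \<surd>s g)\<^sup>2)\<close> for a standard Gaussian \<open>g\<close>; by the following
  induction it also bounds the corresponding moment of a Rademacher sum with variance \<open>s\<close>.\<close>

definition gauss_sq_mgf :: "real \<Rightarrow> real \<Rightarrow> real \<Rightarrow> real" where
  "gauss_sq_mgf t s c = exp (t * c^2 / (1 - 2 * t * s)) / sqrt (1 - 2 * t * s)"

lemma gauss_sq_mgf_step:
  fixes t s a c :: real
  assumes t: "0 \<le> t" and ts: "2*t*(a^2 + s) < 1"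
  shows "(gauss_sq_mgf t s (c - a) + gauss_sq_mgf t s (c + a)) / 2 \<le> gauss_sq_mgf t (a^2 + s) c"
proof -
  define r where "r = 1 - 2 * t * s"
  have "0 \<le> 2*t*a^2"
    using t by simp
  then have rpos: "r > 0"
    using ts unfolding r_def by (simp add: algebra_simps)
  define \<beta> where "\<beta> = t / r"
  define b where "b = \<beta> * a^2"
  have \<beta>0: "\<beta> \<ge> 0"
    using t rpos by (simp add: \<beta>_def)
  have r': "1 - 2*t*(a^2 + s) = r * (1 - 2*b)"
    using rpos by (simp add: r_def b_def \<beta>_def field_simps)
  have "0 < r * (1 - 2*b)"
    using ts r' by simp
  then have b1: "1 - 2*b > 0"
    using rpos by (simp add: zero_less_mult_iff)
  have "(gauss_sq_mgf t s (c - a) + gauss_sq_mgf t s (c + a)) / 2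
      = exp (\<beta>*c^2 + b) * cosh (2*\<beta>*c*a) / sqrt r"
  proof -
    have "t*(c - a)^2/r = (\<beta>*c^2 + b) + -(2*\<beta>*c*a)" "t*(c + a)^2/r = (\<beta>*c^2 + b) + 2*\<beta>*c*a"
      using rpos by (simp_all add: \<beta>_def b_def power2_eq_square field_simps)
    then have "exp (t*(c - a)^2/r) = exp (\<beta>*c^2 + b) * exp (-(2*\<beta>*c*a))"
      "exp (t*(c + a)^2/r) = exp (\<beta>*c^2 + b) * exp (2*\<beta>*c*a)"
      by (simp_all only: exp_add)
    with rpos show ?thesis
      unfolding gauss_sq_mgf_def cosh_def r_def[symmetric] by (simp add: field_simps)
  qed
  also have "\<dots> \<le> exp (\<beta>*c^2 + b) * exp ((2*\<beta>*c*a)^2 / 2) / sqrt r"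
    using rpos by (intro divide_right_mono mult_left_mono cosh_le_exp_half_sq) auto
  also have "\<dots> = exp b * exp (\<beta>*c^2*(1 + 2*b)) / sqrt r"
    by (simp add: b_def power2_eq_square field_simps flip: exp_add)
  also have "\<dots> \<le> exp (\<beta>*c^2 / (1 - 2*b)) / sqrt (1 - 2*b) / sqrt r"
    using \<beta>0 b1 rpos by (intro divide_right_mono exp_le_gauss_factor) auto
  also have "\<dots> = gauss_sq_mgf t (a^2 + s) c"
    unfolding gauss_sq_mgf_def r' using rpos b1 by (simp add: \<beta>_def real_sqrt_mult)
  finally show ?thesis .
qed

lemma sign_avg_exp_sq_le:
  assumes "0 \<le> t" "2 * t * sqnorm D y < 1"
  shows "sign_avg D (\<lambda>e. exp (t * (c + sign_dot e y)^2)) \<le> gauss_sq_mgf t (sqnorm D y) c"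
  using assms
proof (induction D arbitrary: c y)
  case 0
  then show ?case by (simp add: sqnorm_def gauss_sq_mgf_def)
next
  case (Suc D)
  define y' where "y' = (\<lambda>l. y (Suc l))"
  have sq: "sqnorm (Suc D) y = (y 0)^2 + sqnorm D y'"
    by (simp add: sqnorm_Suc y'_def)
  have lt: "2 * t * sqnorm D y' < 1"
    using Suc.prems sq by (smt (verit) mult_left_mono zero_le_power2)
  have "sign_avg (Suc D) (\<lambda>e. exp (t * (c + sign_dot e y)^2))
      = (sign_avg D (\<lambda>e. exp (t * ((c - y 0) + sign_dot e y')^2))
         + sign_avg D (\<lambda>e. exp (t * ((c + y 0) + sign_dot e y')^2))) / 2"
    by (simp add: y'_def algebra_simps)
  also have "\<dots> \<le> (gauss_sq_mgf t (sqnorm D y') (c - y 0) + gauss_sq_mgf t (sqnorm D y') (c + y 0)) / 2"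
    by (intro divide_right_mono add_mono Suc.IH Suc.prems lt) auto
  also have "\<dots> \<le> gauss_sq_mgf t (sqnorm (Suc D) y) c"
    unfolding sq using Suc.prems sq sqnorm_nonneg by (intro gauss_sq_mgf_step) auto
  finally show ?case .
qed

lemma sign_avg_sq: "sign_avg D (\<lambda>e. (c + sign_dot e y)^2) = c^2 + sqnorm D y"
proof (induction D arbitrary: c y)
  case 0
  then show ?case by (simp add: sqnorm_def)
next
  case (Suc D)
  have "sign_avg (Suc D) (\<lambda>e. (c + sign_dot e y)^2)
      = (sign_avg D (\<lambda>e. ((c - y 0) + sign_dot e (\<lambda>l. y (Suc l)))^2)
         + sign_avg D (\<lambda>e. ((c + y 0) + sign_dot e (\<lambda>l. y (Suc l)))^2)) / 2"
    by (simp add: algebra_simps)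
  also have "\<dots> = c^2 + sqnorm (Suc D) y"
    unfolding Suc.IH sqnorm_Suc by (simp add: power2_eq_square algebra_simps)
  finally show ?case .
qed

lemma sign_avg_exp_sq_upper:
  assumes "0 \<le> \<tau>" "\<tau> \<le> 1/4" "0 < sqnorm D y"
  shows "sign_avg D (\<lambda>e. exp (\<tau> / sqnorm D y * (sign_dot e y)^2)) \<le> exp (\<tau> + 4*\<tau>^2)"
proof -
  have "sign_avg D (\<lambda>e. exp (\<tau> / sqnorm D y * (0 + sign_dot e y)^2))
      \<le> gauss_sq_mgf (\<tau> / sqnorm D y) (sqnorm D y) 0"
    using assms by (intro sign_avg_exp_sq_le) auto
  also have "\<dots> = 1 / sqrt (1 - 2*\<tau>)"
    using assms by (simp add: gauss_sq_mgf_def)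
  also have "\<dots> \<le> exp (\<tau> + 4*\<tau>^2)"
  proof -
    have "-(2*\<tau>) - 2*(2*\<tau>)^2 \<le> ln (1 - 2*\<tau>)"
      by (rule ln_one_minus_pos_lower_bound) (use assms in auto)
    then have "exp (-(2*\<tau>) - 2*(2*\<tau>)^2) \<le> exp (ln (1 - 2*\<tau>))"
      by simp
    also have "\<dots> = 1 - 2*\<tau>"
      using assms by simp
    finally have "exp (-(2*\<tau>) - 2*(2*\<tau>)^2) \<le> 1 - 2*\<tau>" .
    moreover have "exp (-(2*\<tau>) - 2*(2*\<tau>)^2) = exp (-(\<tau> + 4*\<tau>^2))^2"
      by (simp add: power2_eq_square flip: exp_add)
    ultimately have "exp (-(\<tau> + 4*\<tau>^2)) \<le> sqrt (1 - 2*\<tau>)"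
      by (simp add: real_le_rsqrt)
    then have "1 / sqrt (1 - 2*\<tau>) \<le> 1 / exp (-(\<tau> + 4*\<tau>^2))"
      using assms by (intro divide_left_mono) auto
    also have "1 / exp (-(\<tau> + 4*\<tau>^2)) = exp (\<tau> + 4*\<tau>^2)"
      by (metis exp_minus inverse_eq_divide inverse_inverse_eq)
    finally show ?thesis .
  qed
  finally show ?thesis
    by simp
qed

lemma sign_avg_fourth_moment_le:
  assumes "0 < sqnorm D y"
  shows "sign_avg D (\<lambda>e. (sign_dot e y)^4) \<le> 6 * (sqnorm D y)^2"
proof -
  define s where "s = sqnorm D y"
  have s: "0 < s"
    using assms by (simp add: s_def)
  have "sign_avg D (\<lambda>e. exp (1/(4 * s) * (0 + sign_dot e y)^2)) \<le> gauss_sq_mgf (1/(4 * s)) s 0"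
    using s unfolding s_def by (intro sign_avg_exp_sq_le) auto
  also have "\<dots> = sqrt 2"
    using s by (simp add: gauss_sq_mgf_def real_sqrt_divide)
  also have "\<dots> \<le> 1.4375"
    by (rule real_le_lsqrt) (auto simp: power2_eq_square)
  finally have mgf: "sign_avg D (\<lambda>e. exp ((sign_dot e y)^2 / (4 * s))) \<le> 1.4375"
    by simp
  \<comment> \<open>\<open>x\<^sup>2 \<le> 2 (exp x - 1 - x)\<close> for \<open>x = Y\<^sup>2 / 4s\<close>\<close>
  have pointwise: "(sign_dot e y)^4 \<le> 32 * s^2 * exp ((sign_dot e y)^2 / (4 * s)) - 32 * s^2 - 8 * s * (sign_dot e y)^2"
    for e
  proof -
    define x where "x = (sign_dot e y)^2 / (4 * s)"
    have "x^2 \<le> 2 * (exp x - 1 - x)"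
      using exp_lower_Taylor_quadratic[of x] s by (simp add: x_def)
    then have "16 * s^2 * x^2 \<le> 16 * s^2 * (2 * (exp x - 1 - x))"
      by (rule mult_left_mono) simp
    moreover have "16 * s^2 * x^2 = (sign_dot e y)^4" "16 * s^2 * x = 4 * s * (sign_dot e y)^2"
      using s by (simp_all add: x_def power2_eq_square field_simps eval_nat_numeral)
    ultimately show ?thesis
      unfolding x_def[symmetric] by (simp add: algebra_simps)
  qed
  have "sign_avg D (\<lambda>e. (sign_dot e y)^4)
      \<le> sign_avg D (\<lambda>e. 32 * s^2 * exp ((sign_dot e y)^2 / (4 * s)) + (- 32 * s^2) + (- 8 * s) * (sign_dot e y)^2)"
    using pointwise by (intro sign_avg_mono) simp
  also have "\<dots> = 32 * s^2 * sign_avg D (\<lambda>e. exp ((sign_dot e y)^2 / (4 * s))) - 32 * s^2 - 8 * s * s"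
    unfolding sign_avg_add sign_avg_cmult sign_avg_const
    using sign_avg_sq[of D 0 y, simplified] by (simp add: s_def)
  also have "\<dots> \<le> 32 * s^2 * 1.4375 - 32 * s^2 - 8 * s * s"
    using mgf by (intro diff_right_mono mult_left_mono) auto
  also have "\<dots> = 6 * s^2"
    by (simp add: power2_eq_square)
  finally show ?thesis
    by (simp add: s_def)
qed

lemma sign_avg_exp_neg_sq_upper:
  assumes "0 \<le> \<tau>" "0 < sqnorm D y"
  shows "sign_avg D (\<lambda>e. exp (- \<tau> / sqnorm D y * (sign_dot e y)^2)) \<le> exp (- \<tau> + 3*\<tau>^2)"
proof -
  define s where "s = sqnorm D y"
  have s: "0 < s"
    using assms by (simp add: s_def)
  have "sign_avg D (\<lambda>e. exp (- \<tau> / s * (sign_dot e y)^2))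
      \<le> sign_avg D (\<lambda>e. 1 + (- \<tau> / s) * (sign_dot e y)^2 + (\<tau>^2 / (2 * s^2)) * (sign_dot e y)^4)"
  proof (rule sign_avg_mono)
    fix e
    have "exp (- (\<tau> / s * (sign_dot e y)^2)) \<le> 1 - \<tau> / s * (sign_dot e y)^2 + (\<tau> / s * (sign_dot e y)^2)^2 / 2"
      using assms s by (intro exp_neg_le_quadratic) simp
    then show "exp (- \<tau> / s * (sign_dot e y)^2)
        \<le> 1 + (- \<tau> / s) * (sign_dot e y)^2 + (\<tau>^2 / (2 * s^2)) * (sign_dot e y)^4"
      by (simp add: power_mult_distrib power_divide eval_nat_numeral field_simps)
  qed
  also have "\<dots> = 1 - \<tau> + (\<tau>^2 / (2 * s^2)) * sign_avg D (\<lambda>e. (sign_dot e y)^4)"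
    unfolding sign_avg_add sign_avg_cmult sign_avg_const
    using sign_avg_sq[of D 0 y, simplified] s by (simp add: s_def)
  also have "\<dots> \<le> 1 - \<tau> + (\<tau>^2 / (2 * s^2)) * (6 * s^2)"
    using sign_avg_fourth_moment_le[OF assms(2)] by (intro add_left_mono mult_left_mono) (auto simp: s_def)
  also have "\<dots> = 1 + (- \<tau> + 3*\<tau>^2)"
    using s by (simp add: field_simps)
  also have "\<dots> \<le> exp (- \<tau> + 3*\<tau>^2)"
    by (rule exp_ge_add_one_self)
  finally show ?thesis
    by (simp add: s_def)
qed

section \<open>Johnson--Lindenstrauss with random signs\<close>

fun sign_avg_rows :: "nat \<Rightarrow> nat \<Rightarrow> (real list list \<Rightarrow> real) \<Rightarrow> real" where
  "sign_avg_rows 0 D F = F []"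
| "sign_avg_rows (Suc d) D F = sign_avg D (\<lambda>r. sign_avg_rows d D (\<lambda>rs. F (r # rs)))"

lemma sign_avg_rows_add: "sign_avg_rows d D (\<lambda>rs. F rs + G rs) = sign_avg_rows d D F + sign_avg_rows d D G"
  by (induction d arbitrary: F G) (simp_all add: sign_avg_add)

lemma sign_avg_rows_cmult: "sign_avg_rows d D (\<lambda>rs. c * F rs) = c * sign_avg_rows d D F"
  by (induction d arbitrary: F) (simp_all add: sign_avg_cmult)

lemma sign_avg_rows_const: "sign_avg_rows d D (\<lambda>rs. c) = c"
  by (induction d) (simp_all add: sign_avg_const)

lemma sign_avg_rows_sum:
  "finite A \<Longrightarrow> sign_avg_rows d D (\<lambda>rs. \<Sum>y\<in>A. F y rs) = (\<Sum>y\<in>A. sign_avg_rows d D (F y))"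
  by (induction A rule: finite_induct) (simp_all add: sign_avg_rows_const sign_avg_rows_add)

lemma sign_avg_rows_prod_list: "sign_avg_rows d D (\<lambda>rs. \<Prod>r\<leftarrow>rs. g r) = (sign_avg D g)^d"
proof (induction d)
  case (Suc d)
  have "sign_avg_rows (Suc d) D (\<lambda>rs. \<Prod>r\<leftarrow>rs. g r) = sign_avg D (\<lambda>r. g r * (sign_avg D g)^d)"
    by (simp add: sign_avg_rows_cmult Suc.IH)
  also have "\<dots> = (sign_avg D g)^d * sign_avg D g"
    using sign_avg_cmult[of D "(sign_avg D g)^d" g] by (simp add: mult.commute)
  finally show ?case
    by simp
qed simp

lemma sign_avg_rows_less_imp_ex:
  "sign_avg_rows d D F < c \<Longrightarrow> \<exists>rs. length rs = d \<and> (\<forall>r\<in>set rs. length r = D) \<and> F rs < c"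
proof (induction d arbitrary: F)
  case (Suc d)
  then have "sign_avg D (\<lambda>r. sign_avg_rows d D (\<lambda>rs. F (r # rs))) < c"
    by simp
  then obtain r where "length r = D" "sign_avg_rows d D (\<lambda>rs. F (r # rs)) < c"
    by (blast dest: sign_avg_less_imp_ex)
  moreover obtain rs where "length rs = d" "\<forall>r\<in>set rs. length r = D" "F (r # rs) < c"
    using Suc.IH calculation(2) by blast
  ultimately show ?case
    by (intro exI[of _ "r # rs"]) simp
qed simp

lemma exp_sum_list: "exp (\<Sum>r\<leftarrow>rs. f r) = (\<Prod>r\<leftarrow>rs. exp (f r))" for f :: "'a \<Rightarrow> real"
  by (induction rs) (simp_all add: exp_add)

lemma sign_avg_rows_exp_sum_le:
  assumes "sign_avg D (\<lambda>r. exp (u * g r)) \<le> exp B"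
  shows "sign_avg_rows d D (\<lambda>rs. exp (u * (\<Sum>r\<leftarrow>rs. g r) + c)) \<le> exp (c + d * B)"
proof -
  have "exp (u * (\<Sum>r\<leftarrow>rs. g r) + c) = exp c * (\<Prod>r\<leftarrow>rs. exp (u * g r))" for rs
    by (simp add: exp_add mult.commute flip: exp_sum_list sum_list_const_mult)
  then have "sign_avg_rows d D (\<lambda>rs. exp (u * (\<Sum>r\<leftarrow>rs. g r) + c))
      = exp c * sign_avg_rows d D (\<lambda>rs. \<Prod>r\<leftarrow>rs. exp (u * g r))"
    by (simp add: sign_avg_rows_cmult)
  also have "\<dots> = exp c * (sign_avg D (\<lambda>r. exp (u * g r)))^d"
    by (simp add: sign_avg_rows_prod_list)
  also have "\<dots> \<le> exp c * (exp B)^d"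
    by (intro mult_left_mono power_mono assms sign_avg_nonneg) auto
  also have "\<dots> = exp (c + d * B)"
    by (simp add: exp_add exp_of_nat_mult)
  finally show ?thesis .
qed

definition sign_proj :: "nat \<Rightarrow> real list list \<Rightarrow> (nat \<Rightarrow> real) \<Rightarrow> nat \<Rightarrow> real" where
  "sign_proj d rs y = (\<lambda>k. if k < d then sign_dot (rs ! k) y / sqrt d else 0)"

lemma sqnorm_sign_proj:
  "length rs = d \<Longrightarrow> sqnorm d (sign_proj d rs y) = (\<Sum>r\<leftarrow>rs. (sign_dot r y)^2) / d"
  unfolding sqnorm_def sign_proj_def
  by (simp add: sum_list_sum_nth atLeast0LessThan power_divide sum_divide_distrib)

lemma sign_dot_eq_0: "length r = D \<Longrightarrow> sqnorm D y = 0 \<Longrightarrow> sign_dot r y = 0"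
proof -
  assume "length r = D" "sqnorm D y = 0"
  then have "\<forall>l<length r. y l = 0"
    unfolding sqnorm_def by (subst (asm) sum_nonneg_eq_0_iff) auto
  then show ?thesis
    by (simp add: sign_dot_def)
qed

text \<open>An exponential (Chernoff) witness for the event that the rows \<open>rs\<close> distort the squared norm
  of \<open>y\<close> by more than a factor \<open>1 \<plusminus> \<delta>\<close>: it is at least \<open>1\<close> on that event, and its mean is small.\<close>

definition jl_deviation :: "real \<Rightarrow> nat \<Rightarrow> nat \<Rightarrow> (nat \<Rightarrow> real) \<Rightarrow> real list list \<Rightarrow> real" where
  "jl_deviation \<delta> d D y rs =
     (let Z = (\<Sum>r\<leftarrow>rs. (sign_dot r y)^2) / sqnorm D y
      in exp (\<delta>/8 * (Z - d * (1 + \<delta>))) + exp (\<delta>/6 * (d * (1 - \<delta>) - Z)))"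

lemma jl_deviation_nonneg: "0 \<le> jl_deviation \<delta> d D y rs"
  by (simp add: jl_deviation_def Let_def add_nonneg_nonneg)

lemma sign_avg_rows_jl_deviation_le:
  assumes y: "0 < sqnorm D y" and \<delta>: "0 < \<delta>" "\<delta> \<le> 1/2"
  shows "sign_avg_rows d D (jl_deviation \<delta> d D y) \<le> 2 * exp (- (d * \<delta>^2 / 16))"
proof -
  define Z where "Z rs = (\<Sum>r\<leftarrow>rs. (sign_dot r y)^2) / sqnorm D y" for rs
  have "sign_avg D (\<lambda>r. exp (\<delta>/8 / sqnorm D y * (sign_dot r y)^2)) \<le> exp (\<delta>/8 + 4*(\<delta>/8)^2)"
    using y \<delta> by (intro sign_avg_exp_sq_upper) auto
  from sign_avg_rows_exp_sum_le[OF this, of d "- (\<delta>/8 * d * (1 + \<delta>))"]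
  have "sign_avg_rows d D (\<lambda>rs. exp (\<delta>/8 * (Z rs - d * (1 + \<delta>))))
      \<le> exp (- (\<delta>/8 * d * (1 + \<delta>)) + d * (\<delta>/8 + 4*(\<delta>/8)^2))"
    using y by (simp add: Z_def field_simps)
  also have "- (\<delta>/8 * d * (1 + \<delta>)) + d * (\<delta>/8 + 4*(\<delta>/8)^2) = - (d * \<delta>^2 / 16)"
    by (simp add: power2_eq_square field_simps)
  finally have upper: "sign_avg_rows d D (\<lambda>rs. exp (\<delta>/8 * (Z rs - d * (1 + \<delta>)))) \<le> exp (- (d * \<delta>^2 / 16))" .
  have "sign_avg D (\<lambda>r. exp (- (\<delta>/6) / sqnorm D y * (sign_dot r y)^2)) \<le> exp (- (\<delta>/6) + 3*(\<delta>/6)^2)"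
    using y \<delta> by (intro sign_avg_exp_neg_sq_upper) auto
  from sign_avg_rows_exp_sum_le[OF this, of d "\<delta>/6 * d * (1 - \<delta>)"]
  have "sign_avg_rows d D (\<lambda>rs. exp (- (\<delta>/6) / sqnorm D y * (\<Sum>r\<leftarrow>rs. (sign_dot r y)^2) + \<delta>/6 * d * (1 - \<delta>)))
      \<le> exp (\<delta>/6 * d * (1 - \<delta>) + d * (- (\<delta>/6) + 3*(\<delta>/6)^2))" .
  moreover have "(\<lambda>rs. exp (- (\<delta>/6) / sqnorm D y * (\<Sum>r\<leftarrow>rs. (sign_dot r y)^2) + \<delta>/6 * d * (1 - \<delta>)))
      = (\<lambda>rs. exp (\<delta>/6 * (d * (1 - \<delta>) - Z rs)))"
    by (simp add: Z_def algebra_simps diff_divide_distrib)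
  ultimately have "sign_avg_rows d D (\<lambda>rs. exp (\<delta>/6 * (d * (1 - \<delta>) - Z rs)))
      \<le> exp (\<delta>/6 * d * (1 - \<delta>) + d * (- (\<delta>/6) + 3*(\<delta>/6)^2))"
    by simp
  also have "\<dots> \<le> exp (- (d * \<delta>^2 / 16))"
    using \<delta> by (simp add: power2_eq_square field_simps)
  finally have lower: "sign_avg_rows d D (\<lambda>rs. exp (\<delta>/6 * (d * (1 - \<delta>) - Z rs))) \<le> exp (- (d * \<delta>^2 / 16))" .
  have "jl_deviation \<delta> d D y = (\<lambda>rs. exp (\<delta>/8 * (Z rs - d * (1 + \<delta>))) + exp (\<delta>/6 * (d * (1 - \<delta>) - Z rs)))"
    by (simp add: jl_deviation_def Let_def Z_def fun_eq_iff)
  then show ?thesis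
    using upper lower by (simp add: sign_avg_rows_add)
qed

lemma sqnorm_sign_proj_bounds:
  assumes rs: "length rs = d" and d: "0 < d" and \<delta>: "0 < \<delta>" and y: "0 < sqnorm D y"
    and dev: "jl_deviation \<delta> d D y rs < 1"
  shows "(1 - \<delta>) * sqnorm D y \<le> sqnorm d (sign_proj d rs y) \<and> sqnorm d (sign_proj d rs y) \<le> (1 + \<delta>) * sqnorm D y"
proof -
  define Z where "Z = (\<Sum>r\<leftarrow>rs. (sign_dot r y)^2) / sqnorm D y"
  have "exp (\<delta>/8 * (Z - d * (1 + \<delta>))) < 1" "exp (\<delta>/6 * (d * (1 - \<delta>) - Z)) < 1"
    using dev exp_gt_zero[of "\<delta>/8 * (Z - d * (1 + \<delta>))"] exp_gt_zero[of "\<delta>/6 * (d * (1 - \<delta>) - Z)"]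
    unfolding jl_deviation_def Let_def Z_def[symmetric] by linarith+
  then have Z: "d * (1 - \<delta>) < Z" "Z < d * (1 + \<delta>)"
    using \<delta> by (simp_all add: mult_less_0_iff)
  have proj: "sqnorm d (sign_proj d rs y) = Z / d * sqnorm D y"
    using y by (simp add: sqnorm_sign_proj[OF rs] Z_def)
  have "(1 - \<delta>) * sqnorm D y \<le> Z / d * sqnorm D y"
    using Z y d by (intro mult_right_mono) (auto simp: field_simps)
  moreover have "Z / d * sqnorm D y \<le> (1 + \<delta>) * sqnorm D y"
    using Z y d by (intro mult_right_mono) (auto simp: field_simps)
  ultimately show ?thesis
    unfolding proj by simp
qed

lemma exists_rows_jl_deviation_lt_one:
  assumes S: "finite S" "real (card S) \<le> P" "\<forall>y\<in>S. 0 < sqnorm D y" and P: "2 \<le> P"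
    and \<delta>: "0 < \<delta>" "\<delta> \<le> 1/2" and d: "33 * ln P / \<delta>^2 \<le> real d"
  shows "\<exists>rs. length rs = d \<and> (\<forall>r\<in>set rs. length r = D) \<and> (\<forall>y\<in>S. jl_deviation \<delta> d D y rs < 1)"
proof -
  have lnP: "0 < ln P"
    using P by simp
  have "sign_avg_rows d D (\<lambda>rs. \<Sum>y\<in>S. jl_deviation \<delta> d D y rs) = (\<Sum>y\<in>S. sign_avg_rows d D (jl_deviation \<delta> d D y))"
    using S by (intro sign_avg_rows_sum)
  also have "\<dots> \<le> (\<Sum>y\<in>S. 2 * exp (- (d * \<delta>^2 / 16)))"
    using S \<delta> by (intro sum_mono sign_avg_rows_jl_deviation_le) auto
  also have "\<dots> \<le> P * (2 * exp (- (d * \<delta>^2 / 16)))"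
    using S by (simp add: mult_right_mono)
  also have "\<dots> < 1"
  proof -
    have "ln (2*P) \<le> 2 * ln P"
      using P by (simp add: ln_mult)
    moreover have "33 * ln P \<le> d * \<delta>^2"
      using d \<delta> by (simp add: field_simps)
    ultimately have "exp (- (d * \<delta>^2 / 16)) < exp (- ln (2*P))"
      using lnP by simp
    also have "\<dots> = 1 / (2*P)"
      using P by (simp add: exp_minus inverse_eq_divide)
    finally show ?thesis
      using P by (simp add: field_simps)
  qed
  finally obtain rs where rs: "length rs = d" "\<forall>r\<in>set rs. length r = D"
    "(\<Sum>y\<in>S. jl_deviation \<delta> d D y rs) < 1"
    using sign_avg_rows_less_imp_ex by blast
  have "\<forall>y\<in>S. jl_deviation \<delta> d D y rs < 1"
  proof
    fix y
    assume "y \<in> S"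
    then have "jl_deviation \<delta> d D y rs \<le> (\<Sum>y\<in>S. jl_deviation \<delta> d D y rs)"
      using S by (intro member_le_sum jl_deviation_nonneg) auto
    with rs(3) show "jl_deviation \<delta> d D y rs < 1"
      by linarith
  qed
  with rs(1,2) show ?thesis
    by blast
qed

lemma johnson_lindenstrauss_signs:
  fixes S :: "(nat \<Rightarrow> real) set"
  assumes S: "finite S" "real (card S) \<le> P" and P: "2 \<le> P"
    and \<delta>: "0 < \<delta>" "\<delta> \<le> 1/2" and d: "33 * ln P / \<delta>^2 \<le> real d"
  shows "\<exists>rs. length rs = d \<and> (\<forall>y\<in>S. (1 - \<delta>) * sqnorm D y \<le> sqnorm d (sign_proj d rs y)
                                      \<and> sqnorm d (sign_proj d rs y) \<le> (1 + \<delta>) * sqnorm D y)"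
proof -
  have "0 < ln P"
    using P by simp
  then have "0 < 33 * ln P / \<delta>^2"
    using \<delta> by simp
  then have dpos: "0 < d"
    using d by linarith
  define S' where "S' = {y\<in>S. 0 < sqnorm D y}"
  have S': "finite S'" "\<forall>y\<in>S'. 0 < sqnorm D y"
    using S by (auto simp: S'_def)
  have "card S' \<le> card S"
    using S by (intro card_mono) (auto simp: S'_def)
  then have "real (card S') \<le> P"
    using S(2) by linarith
  then obtain rs where rs: "length rs = d" "\<forall>r\<in>set rs. length r = D"
    "\<forall>y\<in>S'. jl_deviation \<delta> d D y rs < 1"
    using exists_rows_jl_deviation_lt_one[OF S'(1) _ S'(2) P \<delta> d] by blast
  have "(1 - \<delta>) * sqnorm D y \<le> sqnorm d (sign_proj d rs y) \<and> sqnorm d (sign_proj d rs y) \<le> (1 + \<delta>) * sqnorm D y"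
    if "y \<in> S" for y
  proof (cases "sqnorm D y = 0")
    case True
    have "(\<Sum>r\<leftarrow>rs. (sign_dot r y)^2) = 0"
      using rs(2) by (induction rs) (auto simp: sign_dot_eq_0 True)
    then show ?thesis
      using True by (simp add: sqnorm_sign_proj[OF rs(1)])
  next
    case False
    then have "0 < sqnorm D y"
      using sqnorm_nonneg[of D y] by simp
    moreover have "jl_deviation \<delta> d D y rs < 1"
      using rs(3) that calculation by (simp add: S'_def)
    ultimately show ?thesis
      using dpos \<delta> by (intro sqnorm_sign_proj_bounds[OF rs(1)])
  qed
  with rs(1) show ?thesis
    by blast
qed

section \<open>Convex combinations and Maurey's lemma\<close>

lemma dinner_self_eq_sqnorm: "dinner d v v = sqnorm d v"
  unfolding dinner_def sqnorm_def by (simp add: power2_eq_square)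

lemma dinner_commute: "dinner d u v = dinner d v u"
  unfolding dinner_def by (simp add: mult.commute)

lemma dinner_scale_left: "dinner d (\<lambda>l. c * u l) v = c * dinner d u v"
  unfolding dinner_def by (simp add: sum_distrib_left mult.assoc)

lemma dinner_scale_right: "dinner d u (\<lambda>l. c * v l) = c * dinner d u v"
  unfolding dinner_def by (simp add: sum_distrib_left mult_ac)

lemma dinner_le_sqrt_sqnorm: "dinner d u v \<le> sqrt (sqnorm d u) * sqrt (sqnorm d v)"
proof -
  have "dinner d u v \<le> (\<Sum>l<d. \<bar>u l\<bar> * \<bar>v l\<bar>)"
    unfolding dinner_def by (intro sum_mono) (simp flip: abs_mult)
  also have "\<dots> \<le> L2_set u {..<d} * L2_set v {..<d}"
    by (rule L2_set_mult_ineq)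
  finally show ?thesis
    by (simp add: L2_set_def sqnorm_def)
qed

lemma sqnorm_scale: "sqnorm d (\<lambda>l. c * v l) = c^2 * sqnorm d v"
  unfolding sqnorm_def by (simp add: power_mult_distrib sum_distrib_left)

lemma sqrt_sqnorm_diff_ge: "sqrt (sqnorm d b) - sqrt (sqnorm d (\<lambda>l. a l - b l)) \<le> sqrt (sqnorm d a)"
proof -
  have "sqnorm d (\<lambda>l. b l - a l) = sqnorm d (\<lambda>l. a l - b l)"
    unfolding sqnorm_def by (simp add: power2_commute)
  moreover have "sqrt (sqnorm d b) \<le> sqrt (sqnorm d a) + sqrt (sqnorm d (\<lambda>l. b l - a l))"
    using L2_set_triangle_ineq[of a "\<lambda>l. b l - a l" "{..<d}"] by (simp add: L2_set_def sqnorm_def)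
  ultimately show ?thesis
    by simp
qed

lemma sqnorm_diff_le: "sqnorm d (\<lambda>l. a l - b l) \<le> 2 * sqnorm d a + 2 * sqnorm d b"
proof -
  have "(a l - b l)^2 \<le> 2 * (a l)^2 + 2 * (b l)^2" for l
    using zero_le_power2[of "a l + b l"] by (simp add: power2_eq_square algebra_simps)
  then have "(\<Sum>l<d. (a l - b l)^2) \<le> (\<Sum>l<d. 2 * (a l)^2 + 2 * (b l)^2)"
    by (intro sum_mono)
  then show ?thesis
    by (simp add: sqnorm_def sum.distrib sum_distrib_left)
qed

lemma sqnorm_interpolate:
  "sqnorm d (\<lambda>l. w l + t * (v l - w l))
    = sqnorm d w + 2 * t * (dinner d w v - sqnorm d w) + t^2 * sqnorm d (\<lambda>l. v l - w l)"
  unfolding sqnorm_def dinner_def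
  by (simp add: power2_eq_square algebra_simps sum.distrib sum_subtractf sum_distrib_left)

definition normalize :: "nat \<Rightarrow> (nat \<Rightarrow> real) \<Rightarrow> nat \<Rightarrow> real" where
  "normalize d v = (\<lambda>l. v l / sqrt (sqnorm d v))"

lemma unit_vec_normalize:
  assumes "vec_in d v" "0 < sqnorm d v"
  shows "unit_vec d (normalize d v)"
proof -
  have "sqnorm d (normalize d v) = (1 / sqrt (sqnorm d v))^2 * sqnorm d v"
    using sqnorm_scale[of d "1 / sqrt (sqnorm d v)" v] by (simp add: normalize_def)
  also have "\<dots> = 1"
    using assms(2) by (simp add: power_divide)
  finally show ?thesis
    using assms(1) by (simp add: unit_vec_def vec_in_def normalize_def dinner_self_eq_sqnorm)
qed

lemma dinner_normalize_left: "dinner d (normalize d v) u = dinner d v u / sqrt (sqnorm d v)"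
  using dinner_scale_left[of d "1 / sqrt (sqnorm d v)" v u] by (simp add: normalize_def)

definition convex_weights :: "nat \<Rightarrow> (nat \<Rightarrow> real) \<Rightarrow> bool" where
  "convex_weights n c \<longleftrightarrow> (\<forall>i<n. 0 \<le> c i) \<and> (\<Sum>i<n. c i) = 1"

definition lincomb :: "nat \<Rightarrow> (nat \<Rightarrow> real) \<Rightarrow> (nat \<Rightarrow> nat \<Rightarrow> real) \<Rightarrow> nat \<Rightarrow> real" where
  "lincomb n c p = (\<lambda>l. \<Sum>i<n. c i * p i l)"

lemma convex_weights_ex_le_avg:
  assumes "convex_weights n \<nu>"
  shows "\<exists>i<n. f i \<le> (\<Sum>i<n. \<nu> i * f i)"
proof (rule ccontr)
  assume contra: "\<not> ?thesis"
  obtain i where i: "i < n" "0 < \<nu> i"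
    using assms unfolding convex_weights_def
    by (metis (no_types, lifting) lessThan_iff less_eq_real_def sum.neutral zero_neq_one)
  have "(\<Sum>i<n. \<nu> i * (\<Sum>i<n. \<nu> i * f i)) < (\<Sum>i<n. \<nu> i * f i)"
  proof (intro sum_strict_mono_ex1 ballI bexI)
    fix i
    assume "i \<in> {..<n}"
    then have "(\<Sum>i<n. \<nu> i * f i) \<le> f i" "0 \<le> \<nu> i"
      using assms contra by (auto simp: convex_weights_def)
    then show "\<nu> i * (\<Sum>i<n. \<nu> i * f i) \<le> \<nu> i * f i"
      by (rule mult_left_mono)
  next
    show "\<nu> i * (\<Sum>i<n. \<nu> i * f i) < \<nu> i * f i"
      using i contra by auto
  qed (use i in auto)
  then show False
    using assms by (simp add: convex_weights_def flip: sum_distrib_right)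
qed

lemma convex_weights_sq_dev:
  assumes "convex_weights n \<nu>"
  shows "(\<Sum>i<n. \<nu> i * (w - p i)^2)
    = (w - (\<Sum>i<n. \<nu> i * p i))^2 - (\<Sum>i<n. \<nu> i * p i)^2 + (\<Sum>i<n. \<nu> i * (p i)^2)"
proof -
  have "(\<Sum>i<n. \<nu> i * (w - p i)^2) = (\<Sum>i<n. w^2 * \<nu> i - 2 * w * (\<nu> i * p i) + \<nu> i * (p i)^2)"
    by (intro sum.cong refl) (simp add: power2_eq_square algebra_simps)
  also have "\<dots> = w^2 * (\<Sum>i<n. \<nu> i) - 2 * w * (\<Sum>i<n. \<nu> i * p i) + (\<Sum>i<n. \<nu> i * (p i)^2)"
    by (simp add: sum.distrib sum_subtractf sum_distrib_left)
  finally show ?thesis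
    using assms by (simp add: convex_weights_def power2_eq_square algebra_simps)
qed

text \<open>Maurey's empirical approximation, derandomised: \<open>k\<close> greedily chosen points of the family
  approximate a convex combination in mean square as well as \<open>k\<close> independent samples would.\<close>

lemma maurey_sum:
  assumes \<nu>: "convex_weights n \<nu>"
  shows "\<exists>js. length js = k \<and> set js \<subseteq> {..<n} \<and>
     sqnorm d (\<lambda>l. k * lincomb n \<nu> p l - (\<Sum>i\<leftarrow>js. p i l)) \<le> k * (\<Sum>i<n. \<nu> i * sqnorm d (p i))"
proof (induction k)
  case 0
  then show ?case
    by (simp add: sqnorm_def)
next
  case (Suc k)
  define x where "x = lincomb n \<nu> p"
  define T where "T = (\<Sum>i<n. \<nu> i * sqnorm d (p i))"
  obtain js where js: "length js = k" "set js \<subseteq> {..<n}"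
    "sqnorm d (\<lambda>l. k * x l - (\<Sum>i\<leftarrow>js. p i l)) \<le> k * T"
    using Suc.IH unfolding x_def T_def by blast
  define z where "z = (\<lambda>l. k * x l - (\<Sum>i\<leftarrow>js. p i l))"
  define f where "f = (\<lambda>i. sqnorm d (\<lambda>l. z l + x l - p i l))"
  have "(\<Sum>i<n. \<nu> i * f i) = (\<Sum>l<d. \<Sum>i<n. \<nu> i * ((z l + x l) - p i l)^2)"
    unfolding f_def sqnorm_def sum_distrib_left by (rule sum.swap)
  also have "\<dots> = (\<Sum>l<d. (z l)^2 - (x l)^2 + (\<Sum>i<n. \<nu> i * (p i l)^2))"
    by (intro sum.cong refl) (simp add: convex_weights_sq_dev[OF \<nu>] x_def lincomb_def)
  also have "\<dots> \<le> (\<Sum>l<d. (z l)^2 + (\<Sum>i<n. \<nu> i * (p i l)^2))"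
    by (intro sum_mono) simp
  also have "\<dots> = sqnorm d z + T"
    unfolding sqnorm_def T_def sum.distrib sum_distrib_left by (simp add: sum.swap[of _ "{..<n}"])
  also have "\<dots> \<le> Suc k * T"
    using js(3) unfolding z_def by (simp add: algebra_simps)
  finally have avg: "(\<Sum>i<n. \<nu> i * f i) \<le> Suc k * T" .
  obtain i where i: "i < n" "f i \<le> (\<Sum>i<n. \<nu> i * f i)"
    using convex_weights_ex_le_avg[OF \<nu>] by blast
  have "(\<lambda>l. Suc k * x l - (\<Sum>i\<leftarrow>js @ [i]. p i l)) = (\<lambda>l. z l + x l - p i l)"
    by (simp add: z_def algebra_simps)
  then show ?case
    using js i avg unfolding f_def T_def x_def by (intro exI[of _ "js @ [i]"]) auto
qed

lemma maurey_average:
  assumes \<nu>: "convex_weights n \<nu>" and p: "\<forall>i<n. sqnorm d (p i) \<le> B" and k: "0 < k"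
  shows "\<exists>js. length js = k \<and> set js \<subseteq> {..<n} \<and>
     sqnorm d (\<lambda>l. lincomb n \<nu> p l - (\<Sum>i\<leftarrow>js. p i l) / k) \<le> B / k"
proof -
  define e where "e js = (\<lambda>l. lincomb n \<nu> p l - (\<Sum>i\<leftarrow>js. p i l) / k)" for js
  obtain js where js: "length js = k" "set js \<subseteq> {..<n}"
    "sqnorm d (\<lambda>l. k * lincomb n \<nu> p l - (\<Sum>i\<leftarrow>js. p i l)) \<le> k * (\<Sum>i<n. \<nu> i * sqnorm d (p i))"
    using maurey_sum[OF \<nu>] by blast
  have "(\<Sum>i<n. \<nu> i * sqnorm d (p i)) \<le> (\<Sum>i<n. \<nu> i * B)"
    using \<nu> p by (intro sum_mono mult_left_mono) (auto simp: convex_weights_def)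
  also have "\<dots> = B"
    using \<nu> by (simp add: convex_weights_def flip: sum_distrib_right)
  finally have "k * (k * sqnorm d (e js)) \<le> k * B"
    using js(3) k sqnorm_scale[of d k "e js"]
    by (simp add: e_def power2_eq_square algebra_simps)
  then have "sqnorm d (e js) \<le> B / k"
    using k by (simp add: field_simps)
  then show ?thesis
    using js unfolding e_def by blast
qed

lemma convex_hull_norm_ge_of_averages:
  assumes \<nu>: "convex_weights n \<nu>" and p: "\<forall>i<n. sqnorm d (p i) \<le> B" and k: "0 < k"
    and avg: "\<And>js. length js = k \<Longrightarrow> set js \<subseteq> {..<n} \<Longrightarrow> \<rho> \<le> sqrt (sqnorm d (\<lambda>l. (\<Sum>i\<leftarrow>js. p i l) / k))"
  shows "\<rho> - sqrt (B / k) \<le> sqrt (sqnorm d (lincomb n \<nu> p))"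
proof -
  obtain js where js: "length js = k" "set js \<subseteq> {..<n}"
    and close: "sqnorm d (\<lambda>l. lincomb n \<nu> p l - (\<Sum>i\<leftarrow>js. p i l) / k) \<le> B / k"
    using maurey_average[OF \<nu> p k] by blast
  have "\<rho> - sqrt (B / k)
      \<le> sqrt (sqnorm d (\<lambda>l. (\<Sum>i\<leftarrow>js. p i l) / k)) - sqrt (sqnorm d (\<lambda>l. lincomb n \<nu> p l - (\<Sum>i\<leftarrow>js. p i l) / k))"
    using avg[OF js] real_sqrt_le_mono[OF close] by linarith
  also have "\<dots> \<le> sqrt (sqnorm d (lincomb n \<nu> p))"
    by (rule sqrt_sqnorm_diff_ge)
  finally show ?thesis .
qed

lemma convex_hull_norm_ge_rescale:
  assumes hull: "\<And>\<nu>. convex_weights n \<nu> \<Longrightarrow> \<rho> \<le> sqrt (sqnorm d (lincomb n \<nu> p))"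
    and c: "\<forall>i<n. 0 < c i \<and> c i \<le> R" and w: "convex_weights n w"
  shows "\<rho> / R \<le> sqrt (sqnorm d (lincomb n w (\<lambda>i l. p i l / c i)))"
proof -
  define \<sigma> where "\<sigma> = (\<Sum>i<n. w i / c i)"
  have "0 < n"
    using w by (auto simp: convex_weights_def intro!: gr0I)
  then have R: "0 < R"
    using c by force
  have "(\<Sum>i<n. w i / R) \<le> \<sigma>"
    unfolding \<sigma>_def using c w by (intro sum_mono divide_left_mono) (auto simp: convex_weights_def)
  then have \<sigma>R: "1 / R \<le> \<sigma>"
    using w by (simp add: convex_weights_def flip: sum_divide_distrib)
  moreover have "0 < 1 / R"
    using R by simp
  ultimately have \<sigma>: "0 < \<sigma>"
    by linarith
  define \<nu> where "\<nu> i = w i / (c i * \<sigma>)" for i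
  have "(\<Sum>i<n. \<nu> i) = (\<Sum>i<n. w i / c i) / \<sigma>"
    unfolding \<nu>_def sum_divide_distrib by (simp add: divide_divide_eq_left)
  then have \<nu>: "convex_weights n \<nu>"
    using w c \<sigma> by (auto simp: convex_weights_def \<nu>_def \<sigma>_def)
  have "lincomb n w (\<lambda>i l. p i l / c i) = (\<lambda>l. \<sigma> * lincomb n \<nu> p l)"
    using c \<sigma> by (auto simp: lincomb_def \<nu>_def sum_distrib_left fun_eq_iff field_simps intro!: sum.cong)
  then have eq: "sqrt (sqnorm d (lincomb n w (\<lambda>i l. p i l / c i))) = \<sigma> * sqrt (sqnorm d (lincomb n \<nu> p))"
    using \<sigma> by (simp add: sqnorm_scale real_sqrt_mult)
  show ?thesis
  proof (cases "\<rho> \<le> 0")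
    case True
    then have "\<rho> / R \<le> 0"
      using R by (simp add: divide_nonpos_pos)
    then show ?thesis
      using \<sigma> sqnorm_nonneg unfolding eq by (meson mult_nonneg_nonneg order_trans real_sqrt_ge_zero less_imp_le)
  next
    case False
    have "\<rho> / R = (1 / R) * \<rho>"
      by simp
    also have "\<dots> \<le> \<sigma> * \<rho>"
      using \<sigma>R False by (intro mult_right_mono) auto
    also have "\<dots> \<le> \<sigma> * sqrt (sqnorm d (lincomb n \<nu> p))"
      using hull[OF \<nu>] \<sigma> by (intro mult_left_mono) auto
    finally show ?thesis
      unfolding eq .
  qed
qed

lemma convex_weights_unit: "i < n \<Longrightarrow> convex_weights n (\<lambda>j. if j = i then 1 else 0)"
  by (simp add: convex_weights_def)

lemma lincomb_unit: "i < n \<Longrightarrow> lincomb n (\<lambda>j. if j = i then 1 else 0) a = a i"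
proof -
  assume "i < n"
  have "(\<Sum>j<n. (if j = i then 1 else 0) * a j l) = (\<Sum>j<n. if j = i then a i l else 0)" for l
    by (intro sum.cong) auto
  then show ?thesis
    using \<open>i < n\<close> by (simp add: lincomb_def fun_eq_iff)
qed

lemma convex_weights_mix:
  "convex_weights n c \<Longrightarrow> convex_weights n c' \<Longrightarrow> 0 \<le> t \<Longrightarrow> t \<le> 1
    \<Longrightarrow> convex_weights n (\<lambda>j. (1 - t) * c j + t * c' j)"
  by (simp add: convex_weights_def sum.distrib flip: sum_distrib_left)

lemma lincomb_mix:
  "lincomb n (\<lambda>j. (1 - t) * c j + t * c' j) a
    = (\<lambda>l. lincomb n c a l + t * (lincomb n c' a l - lincomb n c a l))"
  by (simp add: lincomb_def fun_eq_iff algebra_simps sum.distrib sum_subtractf sum_distrib_left)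

text \<open>A convex combination of nearly minimal norm makes an almost nonnegative angle with every
  point, since moving a little towards that point cannot decrease its norm by much.\<close>

lemma min_norm_point_approx:
  assumes n: "0 < n" and a: "\<forall>i<n. sqnorm d (a i) \<le> 1" and t: "0 < t" "t \<le> 1"
  shows "\<exists>c. convex_weights n c \<and> (\<forall>i<n. sqnorm d (lincomb n c a) - 4 * t \<le> dinner d (lincomb n c a) (a i))"
proof -
  define K where "K = (\<lambda>c. sqnorm d (lincomb n c a)) ` Collect (convex_weights n)"
  have K: "K \<noteq> {}" "bdd_below K"
    using convex_weights_unit[OF n] sqnorm_nonneg by (auto simp: K_def intro: bdd_belowI[of _ 0])
  have low: "Inf K \<le> sqnorm d (lincomb n c a)" if "convex_weights n c" for c
    using K(2) that by (intro cInf_lower) (auto simp: K_def)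
  obtain c where c: "convex_weights n c" "sqnorm d (lincomb n c a) < Inf K + t^2"
    using cInf_lessD[OF K(1), of "Inf K + t^2"] t by (auto simp: K_def)
  define w where "w = lincomb n c a"
  have "Inf K \<le> sqnorm d (a 0)"
    using low[OF convex_weights_unit[OF n]] by (simp add: lincomb_unit[OF n])
  moreover have "sqnorm d (a 0) \<le> 1"
    using a n by blast
  ultimately have w2: "sqnorm d w \<le> 2"
    using c(2) t power_le_one[of t 2] unfolding w_def by linarith
  have "sqnorm d w - 4 * t \<le> dinner d w (a i)" if i: "i < n" for i
  proof -
    have "Inf K \<le> sqnorm d (lincomb n (\<lambda>j. (1 - t) * c j + t * (if j = i then 1 else 0)) a)"
      using t by (intro low convex_weights_mix c(1) convex_weights_unit i) auto
    then have "sqnorm d w - t^2 < sqnorm d (lincomb n (\<lambda>j. (1 - t) * c j + t * (if j = i then 1 else 0)) a)"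
      using c(2) unfolding w_def by linarith
    also have "\<dots> = sqnorm d w + 2 * t * (dinner d w (a i) - sqnorm d w) + t^2 * sqnorm d (\<lambda>l. a i l - w l)"
      unfolding lincomb_mix lincomb_unit[OF i] sqnorm_interpolate w_def ..
    also have "\<dots> \<le> sqnorm d w + 2 * t * (dinner d w (a i) - sqnorm d w) + t^2 * 6"
      using sqnorm_diff_le[of d "a i" w] a i w2 by (intro add_left_mono mult_left_mono) auto
    finally have "(2 * t) * (- (7/2) * t) < (2 * t) * (dinner d w (a i) - sqnorm d w)"
      by (simp add: power2_eq_square)
    then have "- (7/2) * t < dinner d w (a i) - sqnorm d w"
      by (rule mult_left_less_imp_less) (use t in simp)
    then show ?thesis
      using t by linarith
  qed
  then show ?thesis
    using c(1) unfolding w_def by blast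
qed

lemma unit_margin_of_convex_hull_norm:
  assumes n: "0 < n" and a: "\<forall>i<n. vec_in d (a i) \<and> sqnorm d (a i) \<le> 1"
    and hull: "\<And>c. convex_weights n c \<Longrightarrow> r \<le> sqrt (sqnorm d (lincomb n c a))"
    and r: "0 < r" and t: "0 < t" "t \<le> 1"
  shows "\<exists>u. unit_vec d u \<and> (\<forall>i<n. r - 4 * t / r \<le> dinner d u (a i))"
proof -
  obtain c where c: "convex_weights n c"
    and near: "\<forall>i<n. sqnorm d (lincomb n c a) - 4 * t \<le> dinner d (lincomb n c a) (a i)"
    using min_norm_point_approx[of n d a t] n a t by auto
  define w where "w = lincomb n c a"
  define N where "N = sqrt (sqnorm d w)"
  have N: "r \<le> N"
    using hull[OF c] by (simp add: N_def w_def)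
  have "vec_in d w"
    using a by (auto simp: w_def lincomb_def vec_in_def intro!: sum.neutral)
  moreover have "0 < sqrt (sqnorm d w)"
    using N r unfolding N_def by linarith
  then have "0 < sqnorm d w"
    by simp
  ultimately have "unit_vec d (normalize d w)"
    by (rule unit_vec_normalize)
  moreover have "r - 4 * t / r \<le> dinner d (normalize d w) (a i)" if "i < n" for i
  proof -
    have "4 * t / N \<le> 4 * t / r"
      using N r t by (intro divide_left_mono) auto
    then have "r - 4 * t / r \<le> N - 4 * t / N"
      using N by linarith
    also have "\<dots> = (N^2 - 4 * t) / N"
      using N r by (simp add: field_simps power2_eq_square)
    also have "\<dots> \<le> dinner d w (a i) / N"
      using near that N r sqnorm_nonneg[of d w] by (intro divide_right_mono) (auto simp: N_def w_def)
    also have "\<dots> = dinner d (normalize d w) (a i)"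
      by (simp add: dinner_normalize_left N_def)
    finally show ?thesis .
  qed
  ultimately show ?thesis
    by blast
qed

section \<open>Margins of sign patterns\<close>

definition bool_sign :: "bool \<Rightarrow> real" where
  "bool_sign b = (if b then 1 else -1)"

lemma bool_sign_sq [simp]: "(bool_sign b)^2 = 1"
  by (simp add: bool_sign_def)

lemma bool_sign_cases: "bool_sign b \<in> {-1, 1}"
  by (simp add: bool_sign_def)

lemma unit_vec_sqnorm: "unit_vec d u \<Longrightarrow> sqnorm d u = 1"
  by (simp add: unit_vec_def dinner_self_eq_sqnorm)

lemma le_bool_sign_mult_iff: "(b \<longrightarrow> m \<le> x) \<and> (\<not> b \<longrightarrow> x \<le> - m) \<longleftrightarrow> m \<le> bool_sign b * x"
  by (cases b) (auto simp: bool_sign_def)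

lemma is_embedding_bias0_iff:
  "is_embedding d N n A m 0 U V \<longleftrightarrow>
     (\<forall>j<N. unit_vec d (U j)) \<and> (\<forall>i<n. unit_vec d (V i)) \<and>
     (\<forall>j<N. \<forall>i<n. m \<le> bool_sign (A j i) * dinner d (U j) (V i))"
  unfolding is_embedding_def add_0 diff_0 le_bool_sign_mult_iff ..

lemma is_embedding_transpose:
  "is_embedding d N n A m \<tau> U V \<longleftrightarrow> is_embedding d n N (\<lambda>i j. A j i) m \<tau> V U"
  unfolding is_embedding_def by (auto simp: dinner_commute)

lemma mrd_transpose: "mrd d N n A = mrd d n N (\<lambda>i j. A j i)"
  unfolding mrd_def using is_embedding_transpose by metis

lemma mrd_inf_transpose: "mrd_inf N n A = mrd_inf n N (\<lambda>i j. A j i)"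
  unfolding mrd_inf_def using mrd_transpose by metis

lemma mrd_ge_of_embedding: "0 \<le> m \<Longrightarrow> is_embedding d N n A m 0 U V \<Longrightarrow> ereal m \<le> mrd d N n A"
  unfolding mrd_def by (rule Sup_upper) blast

lemma mrd_le_mrd_inf: "mrd d N n A \<le> mrd_inf N n A"
  unfolding mrd_inf_def by (rule SUP_upper) simp

lemma margin_le_one:
  assumes emb: "is_embedding d N n A m 0 U V" and "1 \<le> N" "1 \<le> n"
  shows "m \<le> 1"
proof -
  define b where "b = bool_sign (A 0 0)"
  have units: "sqnorm d (U 0) = 1" "sqnorm d (V 0) = 1"
    using emb assms(2,3) by (auto simp: is_embedding_bias0_iff unit_vec_sqnorm)
  have "m \<le> b * dinner d (U 0) (V 0)"
    using emb assms(2,3) by (simp add: is_embedding_bias0_iff b_def)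
  also have "\<dots> = dinner d (\<lambda>l. b * U 0 l) (V 0)"
    by (simp add: dinner_scale_left)
  also have "\<dots> \<le> sqrt (sqnorm d (\<lambda>l. b * U 0 l)) * sqrt (sqnorm d (V 0))"
    by (rule dinner_le_sqrt_sqnorm)
  also have "\<dots> = 1"
    using units by (simp add: sqnorm_scale b_def)
  finally show ?thesis .
qed

lemma mrd_inf_le_one: "1 \<le> N \<Longrightarrow> 1 \<le> n \<Longrightarrow> mrd_inf N n A \<le> 1"
  unfolding mrd_inf_def mrd_def by (intro SUP_least Sup_least) (auto dest: margin_le_one)

text \<open>With \<open>V\<^sub>i\<close> the standard basis of \<open>\<real>\<^sup>n\<close> and \<open>U\<^sub>j\<close> the normalised sign pattern of row \<open>j\<close>,
  every sign pattern has margin \<open>1/\<surd>n\<close>.\<close>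

lemma mrd_inf_ge_inverse_sqrt:
  assumes "1 \<le> n"
  shows "ereal (1 / sqrt n) \<le> mrd_inf N n A"
proof -
  define V :: "nat \<Rightarrow> nat \<Rightarrow> real" where "V = (\<lambda>i l. if l = i then 1 else 0)"
  define U :: "nat \<Rightarrow> nat \<Rightarrow> real" where "U = (\<lambda>j l. if l < n then bool_sign (A j l) / sqrt n else 0)"
  have dinner_UV: "dinner n (U j) (V i) = bool_sign (A j i) / sqrt n" if "i < n" for i j
  proof -
    have "dinner n (U j) (V i) = (\<Sum>l<n. if l = i then bool_sign (A j i) / sqrt n else 0)"
      unfolding dinner_def by (intro sum.cong) (auto simp: U_def V_def)
    then show ?thesis
      using that by simp
  qed
  have "unit_vec n (U j)" for j
  proof -
    have "dinner n (U j) (U j) = (\<Sum>l<n. 1 / n)"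
      unfolding dinner_self_eq_sqnorm sqnorm_def by (intro sum.cong) (auto simp: U_def power_divide)
    then show ?thesis
      using assms by (simp add: unit_vec_def vec_in_def U_def)
  qed
  moreover have "unit_vec n (V i)" if "i < n" for i
  proof -
    have "dinner n (V i) (V i) = (\<Sum>l<n. if l = i then 1 else 0)"
      unfolding dinner_def by (intro sum.cong) (auto simp: V_def)
    then show ?thesis
      using that by (simp add: unit_vec_def vec_in_def V_def)
  qed
  moreover have "1 / sqrt n \<le> bool_sign (A j i) * dinner n (U j) (V i)" if "i < n" for i j
    using that by (simp add: dinner_UV bool_sign_def)
  ultimately have "is_embedding n N n A (1 / sqrt n) 0 U V"
    by (simp add: is_embedding_bias0_iff)
  then have "ereal (1 / sqrt n) \<le> mrd n N n A"
    by (intro mrd_ge_of_embedding) auto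
  also have "\<dots> \<le> mrd_inf N n A"
    by (rule mrd_le_mrd_inf)
  finally show ?thesis .
qed

lemma mrd_inf_real:
  assumes "1 \<le> N" "1 \<le> n"
  obtains m where "mrd_inf N n A = ereal m" "0 < m" "m \<le> 1"
proof -
  have upper: "mrd_inf N n A \<le> 1" and lower: "ereal (1 / sqrt n) \<le> mrd_inf N n A"
    using assms by (auto intro: mrd_inf_le_one mrd_inf_ge_inverse_sqrt)
  then obtain m where m: "mrd_inf N n A = ereal m"
    by (cases "mrd_inf N n A") auto
  have "0 < 1 / sqrt (real n)"
    using assms by simp
  moreover have "1 / sqrt n \<le> m" "m \<le> 1"
    using upper lower m by auto
  ultimately have "0 < m" "m \<le> 1"
    by linarith+
  with m show ?thesis
    by (rule that)
qed

lemma mrd_inf_approx: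
  assumes "mrd_inf N n A = ereal m" "x < m"
  obtains D m0 U V where "x < m0" "0 \<le> m0" "is_embedding D N n A m0 0 U V"
proof -
  have "ereal x < (SUP d. mrd d N n A)"
    using assms unfolding mrd_inf_def by simp
  then obtain D where "ereal x < mrd D N n A"
    by (auto simp: less_SUP_iff)
  then obtain z where "z \<in> {ereal m | m. 0 \<le> m \<and> (\<exists>U V. is_embedding D N n A m 0 U V)}" "ereal x < z"
    unfolding mrd_def by (auto simp: less_Sup_iff)
  then show ?thesis
    using that by auto
qed

lemma mrd_single_column:
  assumes "1 \<le> d"
  shows "ereal 1 \<le> mrd d N 1 A"
proof -
  define V :: "nat \<Rightarrow> nat \<Rightarrow> real" where "V = (\<lambda>i l. if l = 0 then 1 else 0)"
  define U :: "nat \<Rightarrow> nat \<Rightarrow> real" where "U = (\<lambda>j l. if l = 0 then bool_sign (A j 0) else 0)"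
  have first: "(\<Sum>l<d. f l) = f 0" if "\<forall>l. l \<noteq> 0 \<longrightarrow> f l = 0" for f :: "nat \<Rightarrow> real"
    using assms that by (subst sum.mono_neutral_right[of "{..<d}" "{0}"]) auto
  have "is_embedding d N 1 A 1 0 U V"
    using assms unfolding is_embedding_bias0_iff unit_vec_def vec_in_def dinner_def
    by (subst (1 2 3) first) (auto simp: U_def V_def bool_sign_def)
  then show ?thesis
    by (rule mrd_ge_of_embedding[rotated]) simp
qed

section \<open>Dimension reduction\<close>

lemma sum_list_divide: "(\<Sum>x\<leftarrow>xs. f x) / c = (\<Sum>x\<leftarrow>xs. f x / c)" for c :: real
  by (simp add: divide_inverse sum_list_mult_const)

lemma sign_dot_average: "sign_dot r (\<lambda>l. (\<Sum>i\<leftarrow>js. c i * f i l) / k) = (\<Sum>i\<leftarrow>js. c i * sign_dot r (f i)) / k"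
proof -
  have "sign_dot r (\<lambda>l. \<Sum>i\<leftarrow>js. c i * f i l) = (\<Sum>i\<leftarrow>js. c i * sign_dot r (f i))"
    by (induction js) (simp_all add: sign_dot_def sum.distrib distrib_left sum_distrib_left mult_ac)
  moreover have "sign_dot r (\<lambda>l. g l / k) = sign_dot r g / k" for g
    by (simp add: sign_dot_def sum_divide_distrib)
  ultimately show ?thesis
    by simp
qed

lemma dinner_average: "dinner d u (\<lambda>l. (\<Sum>i\<leftarrow>js. c i * f i l) / k) = (\<Sum>i\<leftarrow>js. c i * dinner d u (f i)) / k"
proof -
  have "dinner d u (\<lambda>l. \<Sum>i\<leftarrow>js. c i * f i l) = (\<Sum>i\<leftarrow>js. c i * dinner d u (f i))"
    by (induction js) (simp_all add: dinner_def sum.distrib distrib_left sum_distrib_left mult_ac)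
  moreover have "dinner d u (\<lambda>l. g l / k) = dinner d u g / k" for g
    by (simp add: dinner_def sum_divide_distrib)
  ultimately show ?thesis
    by simp
qed

lemma sign_proj_average:
  "sign_proj d rs (\<lambda>l. (\<Sum>i\<leftarrow>js. c i * f i l) / k) = (\<lambda>l. (\<Sum>i\<leftarrow>js. c i * sign_proj d rs (f i) l) / k)"
proof
  fix l
  show "sign_proj d rs (\<lambda>l. (\<Sum>i\<leftarrow>js. c i * f i l) / k) l = (\<Sum>i\<leftarrow>js. c i * sign_proj d rs (f i) l) / k"
  proof (cases "l < d")
    case True
    have "(\<Sum>i\<leftarrow>js. c i * (sign_dot (rs ! l) (f i) / sqrt d)) = (\<Sum>i\<leftarrow>js. c i * sign_dot (rs ! l) (f i)) / sqrt d"
      by (simp add: sum_list_divide)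
    then show ?thesis
      using True by (simp add: sign_proj_def sign_dot_average mult.commute)
  qed (simp add: sign_proj_def)
qed

lemma vec_in_sign_proj: "vec_in d (sign_proj d rs y)"
  by (simp add: vec_in_def sign_proj_def)

text \<open>All averages of \<open>k\<close> vectors from \<open>\<plusminus>V\<^sub>0, \<dots>, \<plusminus>V\<^sub>n\<^sub>-\<^sub>1\<close>, repetitions allowed: by Maurey's lemma
  they are dense in every signed hull, and there are at most \<open>(2n)\<^sup>k\<close> of them.\<close>

definition signed_averages :: "nat \<Rightarrow> nat \<Rightarrow> (nat \<Rightarrow> nat \<Rightarrow> real) \<Rightarrow> (nat \<Rightarrow> real) set" where
  "signed_averages n k V =
     (\<lambda>xs l. (\<Sum>(i, \<sigma>)\<leftarrow>xs. \<sigma> * V i l) / k) ` {xs. set xs \<subseteq> {..<n} \<times> {-1, 1} \<and> length xs = k}"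

lemma finite_signed_averages: "finite (signed_averages n k V)"
  unfolding signed_averages_def by (intro finite_imageI finite_lists_length_eq) auto

lemma card_signed_averages_le: "card (signed_averages n k V) \<le> (2 * n)^k"
proof -
  have "card (signed_averages n k V) \<le> card {xs. set xs \<subseteq> {..<n} \<times> {-1::real, 1} \<and> length xs = k}"
    unfolding signed_averages_def by (intro card_image_le finite_lists_length_eq) auto
  also have "\<dots> = (card ({..<n} \<times> {-1::real, 1}))^k"
    by (simp add: card_lists_length_eq)
  also have "card ({..<n} \<times> {-1::real, 1}) = 2 * n"
    by (simp add: card_cartesian_product)
  finally show ?thesis .
qed

lemma signed_average_mem:
  assumes "set js \<subseteq> {..<n}" "length js = k" "\<forall>i\<in>set js. s i \<in> {-1, 1}"
  shows "(\<lambda>l. (\<Sum>i\<leftarrow>js. s i * V i l) / k) \<in> signed_averages n k V"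
  unfolding signed_averages_def
proof (rule image_eqI[of _ _ "map (\<lambda>i. (i, s i)) js"])
  show "(\<lambda>l. (\<Sum>i\<leftarrow>js. s i * V i l) / k) = (\<lambda>l. (\<Sum>(i, \<sigma>)\<leftarrow>map (\<lambda>i. (i, s i)) js. \<sigma> * V i l) / k)"
    by (simp add: comp_def)
qed (use assms in auto)

lemma signed_average_norm_ge:
  assumes "sqnorm D U = 1" "\<forall>i\<in>set js. m0 \<le> s i * dinner D U (V i)" "length js = k" "0 < k"
  shows "m0 \<le> sqrt (sqnorm D (\<lambda>l. (\<Sum>i\<leftarrow>js. s i * V i l) / k))"
proof -
  have "m0 = (\<Sum>i\<leftarrow>js. m0) / k"
    using assms(3,4) by (simp add: sum_list_triv)
  also have "\<dots> \<le> (\<Sum>i\<leftarrow>js. s i * dinner D U (V i)) / k"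
    using assms(2,4) by (intro divide_right_mono sum_list_mono) auto
  also have "\<dots> = dinner D U (\<lambda>l. (\<Sum>i\<leftarrow>js. s i * V i l) / k)"
    by (rule dinner_average[symmetric])
  also have "\<dots> \<le> sqrt (sqnorm D (\<lambda>l. (\<Sum>i\<leftarrow>js. s i * V i l) / k))"
    using dinner_le_sqrt_sqnorm[of D U] assms(1) by simp
  finally show ?thesis .
qed

lemma signed_averages_contain:
  assumes "0 < k" "i < n"
  shows "V i \<in> signed_averages n k V"
proof -
  have "(\<lambda>l. (\<Sum>j\<leftarrow>replicate k i. 1 * V j l) / k) \<in> signed_averages n k V"
    using assms by (intro signed_average_mem) auto
  then show ?thesis
    using assms(1) by (simp add: sum_list_replicate)
qed

text \<open>The projected signed hull of the \<open>V\<^sub>i\<close> stays far from the origin: each of its points is close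
  to the projection of a signed average (Maurey), whose norm is preserved and is at least the old
  margin (Cauchy--Schwarz against \<open>U\<close>).\<close>

lemma projected_signed_hull_norm_ge:
  fixes U :: "nat \<Rightarrow> real" and V :: "nat \<Rightarrow> nat \<Rightarrow> real" and s :: "nat \<Rightarrow> real"
    and d :: nat and rs :: "real list list"
  defines "P \<equiv> sign_proj d rs"
  assumes k: "0 < k" and \<delta>: "0 < \<delta>" "\<delta> < 1"
    and U: "sqnorm D U = 1" and s: "\<forall>i<n. s i \<in> {-1, 1}"
    and margin: "\<forall>i<n. m0 \<le> s i * dinner D U (V i)" and V: "\<forall>i<n. sqnorm D (V i) = 1"
    and proj: "\<forall>y \<in> signed_averages n k V.
                 (1 - \<delta>) * sqnorm D y \<le> sqnorm d (P y) \<and> sqnorm d (P y) \<le> (1 + \<delta>) * sqnorm D y"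
    and w: "convex_weights n w"
  shows "(sqrt (1 - \<delta>) * m0 - sqrt ((1 + \<delta>) / k)) / sqrt (1 + \<delta>)
    \<le> sqrt (sqnorm d (lincomb n w (\<lambda>i l. s i * normalize d (P (V i)) l)))"
proof -
  define p where "p i = (\<lambda>l. s i * P (V i) l)" for i
  define c where "c i = sqrt (sqnorm d (P (V i)))" for i
  have s2: "(s i)^2 = 1" if "i < n" for i
    using s that by auto
  have PV: "1 - \<delta> \<le> sqnorm d (P (V i))" "sqnorm d (P (V i)) \<le> 1 + \<delta>" if "i < n" for i
    using proj[rule_format, OF signed_averages_contain[OF k that]] V that by auto
  have p: "\<forall>i<n. sqnorm d (p i) \<le> 1 + \<delta>"
    using PV s2 by (simp add: p_def sqnorm_scale)
  have c: "\<forall>i<n. 0 < c i \<and> c i \<le> sqrt (1 + \<delta>)"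
    using PV \<delta> by (fastforce simp: c_def)
  have averages: "sqrt (1 - \<delta>) * m0 \<le> sqrt (sqnorm d (\<lambda>l. (\<Sum>i\<leftarrow>js. p i l) / k))"
    if js: "length js = k" "set js \<subseteq> {..<n}" for js
  proof -
    define q where "q = (\<lambda>l. (\<Sum>i\<leftarrow>js. s i * V i l) / k)"
    have "q \<in> signed_averages n k V"
      unfolding q_def using js s by (intro signed_average_mem) auto
    then have "sqrt ((1 - \<delta>) * sqnorm D q) \<le> sqrt (sqnorm d (P q))"
      using proj by simp
    moreover have "m0 \<le> sqrt (sqnorm D q)"
      unfolding q_def using U margin js k by (intro signed_average_norm_ge) auto
    then have "sqrt (1 - \<delta>) * m0 \<le> sqrt ((1 - \<delta>) * sqnorm D q)"
      using \<delta> by (simp add: real_sqrt_mult mult_left_mono)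
    moreover have "P q = (\<lambda>l. (\<Sum>i\<leftarrow>js. p i l) / k)"
      unfolding q_def P_def p_def by (rule sign_proj_average)
    ultimately show ?thesis
      by (metis order_trans)
  qed
  have "(\<lambda>i l. s i * normalize d (P (V i)) l) = (\<lambda>i l. p i l / c i)"
    by (simp add: p_def c_def normalize_def)
  then show ?thesis
    using convex_hull_norm_ge_of_averages[OF _ p k averages] c w by (auto intro: convex_hull_norm_ge_rescale)
qed

lemma projection_embedding:
  assumes emb: "is_embedding D N n A m0 0 U V" and n: "0 < n" and k: "0 < k" and \<delta>: "0 < \<delta>" "\<delta> < 1"
    and proj: "\<forall>y \<in> signed_averages n k V.
      (1 - \<delta>) * sqnorm D y \<le> sqnorm d (sign_proj d rs y) \<and> sqnorm d (sign_proj d rs y) \<le> (1 + \<delta>) * sqnorm D y"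
    and r: "0 < r" "r \<le> (sqrt (1 - \<delta>) * m0 - sqrt ((1 + \<delta>) / k)) / sqrt (1 + \<delta>)"
    and t: "0 < t" "t \<le> 1"
  shows "\<exists>U' V'. is_embedding d N n A (r - 4 * t / r) 0 U' V'"
proof -
  define V' where "V' i = normalize d (sign_proj d rs (V i))" for i
  have V: "\<forall>i<n. sqnorm D (V i) = 1" and U: "\<forall>j<N. sqnorm D (U j) = 1"
    and margin: "\<forall>j<N. \<forall>i<n. m0 \<le> bool_sign (A j i) * dinner D (U j) (V i)"
    using emb by (auto simp: is_embedding_bias0_iff unit_vec_sqnorm)
  have V': "unit_vec d (V' i)" if "i < n" for i
  proof -
    have "1 - \<delta> \<le> sqnorm d (sign_proj d rs (V i))"
      using proj[rule_format, OF signed_averages_contain[OF k that]] V that by auto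
    then show ?thesis
      unfolding V'_def using \<delta> by (intro unit_vec_normalize vec_in_sign_proj) auto
  qed
  have "\<exists>u. unit_vec d u \<and> (\<forall>i<n. r - 4 * t / r \<le> bool_sign (A j i) * dinner d u (V' i))" if "j < N" for j
  proof -
    define a where "a i = (\<lambda>l. bool_sign (A j i) * V' i l)" for i
    have "\<forall>i<n. vec_in d (a i) \<and> sqnorm d (a i) \<le> 1"
      using V' by (auto simp: a_def sqnorm_scale unit_vec_sqnorm unit_vec_def vec_in_def)
    moreover have "r \<le> sqrt (sqnorm d (lincomb n w a))" if "convex_weights n w" for w
      using projected_signed_hull_norm_ge[of k \<delta> D "U j" n "\<lambda>i. bool_sign (A j i)" m0 V d rs w]
        k \<delta> U margin V proj r that \<open>j < N\<close> bool_sign_cases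
      unfolding a_def V'_def by fastforce
    ultimately obtain u where "unit_vec d u" "\<forall>i<n. r - 4 * t / r \<le> dinner d u (a i)"
      using unit_margin_of_convex_hull_norm[OF n _ _ r(1) t] by blast
    then show ?thesis
      by (auto simp: a_def dinner_scale_right)
  qed
  then obtain U' where "\<forall>j<N. unit_vec d (U' j) \<and> (\<forall>i<n. r - 4 * t / r \<le> bool_sign (A j i) * dinner d (U' j) (V' i))"
    by metis
  with V' have "is_embedding d N n A (r - 4 * t / r) 0 U' V'"
    by (simp add: is_embedding_bias0_iff)
  then show ?thesis
    by blast
qed

lemma jl_dimension_suffices:
  assumes n: "2 \<le> n" and \<epsilon>: "0 < \<epsilon>" "\<epsilon> \<le> 1/2" and m: "0 < m" "m \<le> 1"
    and k: "real k \<le> 128 / (\<epsilon>^2 * m^2) + 1"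
    and d: "600000 / \<epsilon>^4 * (1 / m^2) * ln n \<le> real d"
  shows "33 * ln ((2 * real n)^k) / (\<epsilon> / 8)^2 \<le> real d"
proof -
  have lnn: "0 \<le> ln (real n)"
    using n by simp
  have "ln ((2 * real n)^k) = k * ln (2 * real n)"
    using n by (intro ln_realpow)
  also have "\<dots> \<le> k * ln (real n ^ 2)"
    using n by (intro mult_left_mono) (auto simp: power2_eq_square)
  also have "\<dots> = 2 * real k * ln n"
    using n by (simp add: ln_realpow)
  finally have lnP: "ln ((2 * real n)^k) \<le> 2 * real k * ln n" .
  have em: "0 < \<epsilon>^2 * m^2" "\<epsilon>^2 * m^2 \<le> 1"
    using \<epsilon> m by (auto intro!: mult_le_one power_le_one)
  then have "1 \<le> 1 / (\<epsilon>^2 * m^2)"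
    by (simp add: field_simps)
  then have kk: "real k \<le> 129 / (\<epsilon>^2 * m^2)"
    using k by (simp add: field_simps)
  have "33 * ln ((2 * real n)^k) / (\<epsilon> / 8)^2 = (64 * 33 / \<epsilon>^2) * ln ((2 * real n)^k)"
    by (simp add: power2_eq_square field_simps)
  also have "\<dots> \<le> (64 * 33 / \<epsilon>^2) * (2 * real k * ln n)"
    using lnP \<epsilon> by (intro mult_left_mono) auto
  also have "\<dots> \<le> (64 * 33 / \<epsilon>^2) * (2 * (129 / (\<epsilon>^2 * m^2)) * ln n)"
    using kk lnn \<epsilon> by (intro mult_left_mono mult_right_mono) auto
  also have "\<dots> = 544896 / \<epsilon>^4 * (1 / m^2) * ln n"
    using \<epsilon> m by (simp add: power2_eq_square field_simps eval_nat_numeral)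
  also have "\<dots> \<le> 600000 / \<epsilon>^4 * (1 / m^2) * ln n"
    using lnn \<epsilon> m by (intro mult_right_mono divide_right_mono) auto
  finally show ?thesis
    using d by linarith
qed

lemma one_minus_le_inverse_sqrt: "0 \<le> \<delta> \<Longrightarrow> \<delta> \<le> 1 \<Longrightarrow> 1 - \<delta> \<le> 1 / sqrt (1 + \<delta>)" for \<delta> :: real
proof -
  assume \<delta>: "0 \<le> \<delta>" "\<delta> \<le> 1"
  have "\<delta>^2 \<le> 1"
    using \<delta> by (intro power_le_one) auto
  have "((1 - \<delta>) * sqrt (1 + \<delta>))^2 = (1 - \<delta>) * (1 - \<delta>^2)"
    using \<delta> by (simp add: power_mult_distrib power2_eq_square algebra_simps)
  also have "\<dots> \<le> 1^2"
    using \<delta> \<open>\<delta>^2 \<le> 1\<close> mult_mono[of "1 - \<delta>" 1 "1 - \<delta>^2" 1] by simp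
  finally have "(1 - \<delta>) * sqrt (1 + \<delta>) \<le> 1"
    by (rule power2_le_imp_le) simp
  then show ?thesis
    using \<delta> by (simp add: field_simps)
qed

text \<open>The margin lost in the reduction: a factor \<open>(1 - \<delta>)\<close> each from the choice of the embedding,
  from the lower and from the upper distortion of the projection, plus the Maurey error \<open>\<delta> m\<close>.\<close>

lemma margin_after_reduction:
  assumes \<delta>: "0 < \<delta>" "\<delta> \<le> 1/16" and m: "0 < m" and m0: "(1 - \<delta>) * m \<le> m0"
    and k: "2 / (\<delta> * m)^2 \<le> real k"
  shows "(1 - 4 * \<delta>) * m \<le> (sqrt (1 - \<delta>) * m0 - sqrt ((1 + \<delta>) / k)) / sqrt (1 + \<delta>)"
proof -
  have kpos: "0 < real k"
    using k \<delta> m by (smt (verit) divide_pos_pos zero_less_power mult_pos_pos)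
  have "(1 + \<delta>) / k \<le> 2 / k"
    using \<delta> kpos by (intro divide_right_mono) auto
  also have "\<dots> \<le> (\<delta> * m)^2"
    using k kpos \<delta> m by (simp add: field_simps)
  finally have sampling: "sqrt ((1 + \<delta>) / k) \<le> \<delta> * m"
    using \<delta> m by (simp add: real_sqrt_le_iff real_le_lsqrt)
  have "(1 - \<delta>)^2 \<le> 1 - \<delta>"
    using \<delta> by (simp add: power2_eq_square mult_le_cancel_left1)
  then have "1 - \<delta> \<le> sqrt (1 - \<delta>)"
    by (rule real_le_rsqrt)
  then have "(1 - \<delta>) * ((1 - \<delta>) * m) \<le> sqrt (1 - \<delta>) * m0"
    using m0 \<delta> m by (intro mult_mono) auto
  then have num: "((1 - \<delta>)^2 - \<delta>) * m \<le> sqrt (1 - \<delta>) * m0 - sqrt ((1 + \<delta>) / k)"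
    using sampling by (simp add: power2_eq_square algebra_simps)
  have "(1 - \<delta>)^2 - \<delta> = (1 - 3 * \<delta>) + \<delta>^2"
    by (simp add: power2_eq_square algebra_simps)
  then have "0 \<le> (1 - \<delta>)^2 - \<delta>"
    using \<delta> zero_le_power2[of \<delta>] by linarith
  then have num_nonneg: "0 \<le> ((1 - \<delta>)^2 - \<delta>) * m"
    using m by simp
  have "(1 - \<delta>) * ((1 - \<delta>)^2 - \<delta>) = (1 - 4 * \<delta>) + \<delta>^2 * (4 - \<delta>)"
    by (simp add: power2_eq_square algebra_simps)
  moreover have "0 \<le> \<delta>^2 * (4 - \<delta>)"
    using \<delta> by simp
  ultimately have "(1 - 4 * \<delta>) * m \<le> (1 - \<delta>) * (((1 - \<delta>)^2 - \<delta>) * m)"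
    using m by (simp add: mult_right_mono flip: mult.assoc)
  also have "\<dots> \<le> (1 / sqrt (1 + \<delta>)) * (sqrt (1 - \<delta>) * m0 - sqrt ((1 + \<delta>) / k))"
    using one_minus_le_inverse_sqrt[of \<delta>] num num_nonneg \<delta> by (intro mult_mono) auto
  finally show ?thesis
    by simp
qed

lemma reduced_margin_ge:
  fixes \<epsilon> m :: real
  assumes \<epsilon>: "0 < \<epsilon>" "\<epsilon> \<le> 1" and m: "0 < m"
  shows "(1 - \<epsilon>) * m \<le> (1 - \<epsilon>/2) * m - 4 * (\<epsilon> * m^2 / 16) / ((1 - \<epsilon>/2) * m)"
proof -
  define r where "r = (1 - \<epsilon>/2) * m"
  have "\<epsilon> * m \<le> 1 * m"
    using \<epsilon> m by (intro mult_right_mono) auto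
  then have r: "m / 2 \<le> r" "r = m - \<epsilon> * m / 2"
    by (simp_all add: r_def algebra_simps)
  have "4 * (\<epsilon> * m^2 / 16) / r = (\<epsilon> * m / 2) * ((m / 2) / r)"
    using r m by (simp add: power2_eq_square field_simps)
  also have "\<dots> \<le> \<epsilon> * m / 2"
    using r \<epsilon> m by (intro mult_left_le) auto
  finally have "4 * (\<epsilon> * m^2 / 16) / r \<le> \<epsilon> * m / 2" .
  moreover have "(1 - \<epsilon>) * m = m - \<epsilon> * m"
    by (simp add: algebra_simps)
  ultimately show ?thesis
    unfolding r_def[symmetric] using r by linarith
qed

lemma sign_proj_signed_averages_exists:
  assumes n: "2 \<le> n" and \<epsilon>: "0 < \<epsilon>" "\<epsilon> \<le> 1/2" and m: "0 < m" "m \<le> 1"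
    and k: "0 < k" "real k \<le> 128 / (\<epsilon>^2 * m^2) + 1"
    and d: "600000 / \<epsilon>^4 * (1 / m^2) * ln n \<le> real d"
  shows "\<exists>rs. \<forall>y \<in> signed_averages n k V. (1 - \<epsilon>/8) * sqnorm D y \<le> sqnorm d (sign_proj d rs y)
                                          \<and> sqnorm d (sign_proj d rs y) \<le> (1 + \<epsilon>/8) * sqnorm D y"
proof -
  have "real (card (signed_averages n k V)) \<le> real ((2 * n)^k)"
    using card_signed_averages_le by (simp only: of_nat_le_iff)
  moreover have "2 * real n \<le> (2 * real n)^k"
    using n k by (intro self_le_power) auto
  ultimately show ?thesis
    using johnson_lindenstrauss_signs[of "signed_averages n k V" "(2 * real n)^k" "\<epsilon>/8" d D]
      finite_signed_averages jl_dimension_suffices[OF n \<epsilon> m k(2) d] n \<epsilon> by auto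
qed

lemma mrd_dimension_reduction:
  assumes n: "2 \<le> n" and \<epsilon>: "0 < \<epsilon>" "\<epsilon> \<le> 1/2"
    and m: "mrd_inf N n A = ereal m" "0 < m" "m \<le> 1"
    and d: "600000 / \<epsilon>^4 * (1 / m^2) * ln n \<le> real d"
  shows "ereal ((1 - \<epsilon>) * m) \<le> mrd d N n A"
proof -
  define \<delta> where "\<delta> = \<epsilon> / 8"
  define k where "k = nat \<lceil>128 / (\<epsilon>^2 * m^2)\<rceil>"
  have \<delta>: "0 < \<delta>" "\<delta> \<le> 1/16"
    using \<epsilon> by (auto simp: \<delta>_def)
  have pos: "0 < 128 / (\<epsilon>^2 * m^2)"
    using \<epsilon> m by simp
  have "2 / (\<delta> * m)^2 = 128 / (\<epsilon>^2 * m^2)"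
    using \<epsilon> m unfolding \<delta>_def by (simp add: power_mult_distrib power_divide field_simps)
  moreover have "128 / (\<epsilon>^2 * m^2) \<le> real k"
    unfolding k_def by linarith
  moreover have "real k = of_int \<lceil>128 / (\<epsilon>^2 * m^2)\<rceil>"
    using pos unfolding k_def by simp
  ultimately have k: "2 / (\<delta> * m)^2 \<le> real k" "real k \<le> 128 / (\<epsilon>^2 * m^2) + 1" "0 < k"
    using pos by linarith+
  have "(1 - \<delta>) * m < m"
    using \<delta> m by (simp add: algebra_simps)
  then obtain D m0 U V where m0: "(1 - \<delta>) * m < m0" and emb: "is_embedding D N n A m0 0 U V"
    using mrd_inf_approx[OF m(1)] by blast
  obtain rs where proj: "\<forall>y \<in> signed_averages n k V.
      (1 - \<delta>) * sqnorm D y \<le> sqnorm d (sign_proj d rs y) \<and> sqnorm d (sign_proj d rs y) \<le> (1 + \<delta>) * sqnorm D y"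
    using sign_proj_signed_averages_exists[OF n \<epsilon> m(2,3) k(3,2) d] unfolding \<delta>_def by blast
  define r where "r = (1 - \<epsilon>/2) * m"
  define t where "t = \<epsilon> * m^2 / 16"
  have "1 - 4 * \<delta> = 1 - \<epsilon>/2"
    by (simp add: \<delta>_def)
  then have r: "0 < r" "r \<le> (sqrt (1 - \<delta>) * m0 - sqrt ((1 + \<delta>) / k)) / sqrt (1 + \<delta>)"
    using margin_after_reduction[OF \<delta> m(2) _ k(1)] m0 \<epsilon> m by (auto simp: r_def)
  have "m^2 \<le> 1"
    using m by (simp add: power_le_one)
  then have "\<epsilon> * m^2 \<le> 1"
    using \<epsilon> by (intro mult_le_one) auto
  then have t: "0 < t" "t \<le> 1"
    using \<epsilon> m by (auto simp: t_def)
  obtain U' V' where "is_embedding d N n A (r - 4 * t / r) 0 U' V'"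
    using projection_embedding[OF emb _ k(3) \<delta>(1) _ proj r t] n \<delta> by auto
  moreover have "(1 - \<epsilon>) * m \<le> r - 4 * t / r"
    unfolding r_def t_def using \<epsilon> m by (intro reduced_margin_ge) auto
  moreover have "0 \<le> (1 - \<epsilon>) * m"
    using \<epsilon> m by simp
  ultimately show ?thesis
    by (meson ereal_less_eq(3) mrd_ge_of_embedding order_trans)
qed

lemma mrd_dimension_reduction_min:
  assumes "2 \<le> min n N" and \<epsilon>: "0 < \<epsilon>" "\<epsilon> \<le> 1/2"
    and m: "mrd_inf N n A = ereal m" "0 < m" "m \<le> 1"
    and d: "600000 / \<epsilon>^4 * (1 / m^2) * ln (real (min n N)) \<le> real d"
  shows "ereal ((1 - \<epsilon>) * m) \<le> mrd d N n A"
proof (cases "n \<le> N")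
  case True
  then show ?thesis
    using mrd_dimension_reduction[OF _ \<epsilon> m] assms by simp
next
  case False
  have "mrd_inf n N (\<lambda>i j. A j i) = ereal m"
    using m(1) mrd_inf_transpose by metis
  then show ?thesis
    using mrd_dimension_reduction[OF _ \<epsilon> _ m(2,3)] assms False by (simp add: mrd_transpose[of d N n A])
qed

lemma mrd_ge_one_of_min_eq_one:
  assumes "min n N = 1" "1 \<le> d"
  shows "ereal 1 \<le> mrd d N n A"
proof (cases "n = 1")
  case True
  then show ?thesis
    using mrd_single_column[OF assms(2), of N A] by simp
next
  case False
  then have "N = 1"
    using assms(1) by (simp add: min_def split: if_splits)
  moreover have "mrd d N n A = mrd d n N (\<lambda>i j. A j i)"
    by (rule mrd_transpose)
  ultimately show ?thesis
    using mrd_single_column[OF assms(2), of n "\<lambda>i j. A j i"] by simp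
qed

definition reduction_const :: "real \<Rightarrow> real" where
  "reduction_const \<epsilon> = 600000 / (min \<epsilon> (1/2))^4"

lemma reduction_const_bigo: "reduction_const \<in> O[at_right 0](\<lambda>\<epsilon>. 1 / \<epsilon> ^ 4)"
proof (rule bigoI[where c = 600000])
  have "eventually (\<lambda>x. x \<in> {0<..<(1/2::real)}) (at_right 0)"
    by (rule eventually_at_right_real) simp
  then show "eventually (\<lambda>x. norm (reduction_const x) \<le> 600000 * norm (1 / x ^ 4)) (at_right 0)"
    by (rule eventually_mono) (simp add: reduction_const_def)
qed

lemma mrd_reduced_dim_ge:
  assumes N: "1 \<le> N" and n: "1 \<le> n" and \<epsilon>: "0 < \<epsilon>"
    and m: "mrd_inf N n A = ereal m" "0 < m" "m \<le> 1"
    and d: "1 \<le> d" "reduction_const \<epsilon> * m powr (-2) * ln (real (min n N)) \<le> real d"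
  shows "ereal ((1 - \<epsilon>) * m) \<le> mrd d N n A"
proof (cases "min n N = 1")
  case True
  moreover have "(1 - \<epsilon>) * m \<le> 1"
    using \<epsilon> m by (smt (verit) mult_le_one mult_nonneg_nonneg)
  ultimately show ?thesis
    using mrd_ge_one_of_min_eq_one[OF _ d(1)] by (meson ereal_less_eq(3) order_trans)
next
  case False
  define \<epsilon>' where "\<epsilon>' = min \<epsilon> (1/2)"
  have \<epsilon>': "0 < \<epsilon>'" "\<epsilon>' \<le> 1/2" "\<epsilon>' \<le> \<epsilon>"
    using \<epsilon> by (auto simp: \<epsilon>'_def)
  have "m powr (-2) = 1 / m^2"
    using m by (simp add: powr_minus powr_realpow divide_inverse)
  then have "600000 / \<epsilon>'^4 * (1 / m^2) * ln (real (min n N)) \<le> real d"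
    using d(2) by (simp add: reduction_const_def \<epsilon>'_def)
  then have "ereal ((1 - \<epsilon>') * m) \<le> mrd d N n A"
    using False N n by (intro mrd_dimension_reduction_min \<epsilon>'(1,2) m) auto
  moreover have "(1 - \<epsilon>) * m \<le> (1 - \<epsilon>') * m"
    using \<epsilon>' m by (intro mult_right_mono) auto
  ultimately show ?thesis
    by (meson ereal_less_eq(3) order_trans)
qed

theorem theorem1p4:
  "\<exists>C :: real \<Rightarrow> real.
     C \<in> O[at_right 0](\<lambda>\<epsilon>. 1 / \<epsilon> ^ 4) \<and>
     (\<forall>\<epsilon>>0. \<forall>(N::nat) (n::nat) (A :: nat \<Rightarrow> nat \<Rightarrow> bool). N \<ge> 1 \<longrightarrow> n \<ge> 1 \<longrightarrow>
        (let m_inf = real_of_ereal (mrd_inf N n A);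
             d = nat (max 1 \<lceil>C \<epsilon> * m_inf powr (-2) * ln (real (min n N))\<rceil>)
         in mrd d N n A \<ge> ereal ((1 - \<epsilon>) * m_inf)))"
proof (intro exI[of _ reduction_const] conjI allI impI)
  show "reduction_const \<in> O[at_right 0](\<lambda>\<epsilon>. 1 / \<epsilon> ^ 4)"
    by (rule reduction_const_bigo)
next
  fix \<epsilon> :: real and N n :: nat and A :: "nat \<Rightarrow> nat \<Rightarrow> bool"
  assume \<epsilon>: "\<epsilon> > 0" and N: "N \<ge> 1" and n: "n \<ge> 1"
  obtain m where m: "mrd_inf N n A = ereal m" "0 < m" "m \<le> 1"
    using mrd_inf_real[OF N n] by blast
  define d where "d = nat (max 1 \<lceil>reduction_const \<epsilon> * m powr (-2) * ln (real (min n N))\<rceil>)"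
  have "real d = of_int (max 1 \<lceil>reduction_const \<epsilon> * m powr (-2) * ln (real (min n N))\<rceil>)"
    unfolding d_def by simp
  then have d: "1 \<le> d" "reduction_const \<epsilon> * m powr (-2) * ln (real (min n N)) \<le> real d"
    by linarith+
  have "ereal ((1 - \<epsilon>) * m) \<le> mrd d N n A"
    using mrd_reduced_dim_ge[OF N n \<epsilon> m d] .
  then show "let m_inf = real_of_ereal (mrd_inf N n A);
                 d = nat (max 1 \<lceil>reduction_const \<epsilon> * m_inf powr (-2) * ln (real (min n N))\<rceil>)
             in mrd d N n A \<ge> ereal ((1 - \<epsilon>) * m_inf)"
    by (simp add: Let_def m(1) d_def)
qed

end
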